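(* Let $n\ge3$ and $1\le i,j\le n-1$ with $|i-j|>1$. Then $x_i+x_{i+1}-x_j-x_{j+1}\in R(g_ig_j)$.
   Context: Let $d,n\ge1$ be integers and $u$ an indeterminate. The Yokonuma–Hecke algebra $\mathrm{Y}_{d,n}(u)$ is the associative $\mathbb{C}[u,u^{-1}]$-algebra generated by $g_1,\dots,g_{n-1},t_1,\dots,t_n$ subject to: $g_ig_j=g_jg_i$ for $|i-j|>1$; $g_ig_{i+1}g_i=g_{i+1}g_ig_{i+1}$ for $1\le i\le n-2$; $t_it_j=t_jt_i$ for all $i,j$; $t_jg_i=g_it_{s_i(j)}$ for all $i,j$, where $s_i$ is the transposition $(i,i+1)$; $t_j^d=1$ for all $j$; and $g_i^2=1+(u-1)e_i+(u-1)e_ig_i$, where $e_i=\frac1d\sum_{s=0}^{d-1}t_i^st_{i+1}^{-s}$. For $n\ge3$, the Yokonuma–Temperley–Lieb algebra $\mathrm{YTL}_{d,n}(u)$ is the quotient of $\mathrm{Y}_{d,n}(u)$ by the two-sided ideal generated by the elements $g_ig_{i+1}g_i+g_ig_{i+1}+g_{i+1}g_i+g_i+g_{i+1}+1$, $1\le i\le n-2$; images of the generators are denoted by the same letters. A word is an element of the form $w=t_1^{r_1}\cdots t_n^{r_n}g_{j_1}\cdots g_{j_m}$; its degree is $\deg(w)=m$. $\mathfrak{T}_n$ is the set of pairs $(\underline{i},\underline{k})$ of $p$-tuples of non-negative integers $(i_1,\dots,i_p)$, $(k_1,\dots,k_p)$, $0\le p\le n-1$, with $1\le i_1<\dots<i_p\le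 n-1$ and $1\le i_1-k_1<\dots<i_p-k_p\le n-1$; $g_{\underline{i},\underline{k}}=\prod_{j=1}^p(g_{i_j}g_{i_j-1}\cdots g_{i_j-k_j})$, $g_{\emptyset,\emptyset}=1$. Let $S=\{t_1^{r_1}\cdots t_n^{r_n}g_{\underline{i},\underline{k}}\mid(\underline{i},\underline{k})\in\mathfrak{T}_n,\ r_j\in\{0,\dots,d-1\}\}$ and $S^{<w}=\{s\in S\mid \deg(s)<\deg(w)\}$. Let $A_{d,n}$ be the complex group algebra of $(\mathbb Z/d\mathbb Z)^n$ with commuting generators $x_1,\dots,x_n$, $x_j^d=1$. For a word $w$, $R(w)=\{P\in A_{d,n}\mid P(t_1,\dots,t_n)\,w\in\mathrm{Span}_{\mathbb{C}[u,u^{-1}]}(S^{<w})\}$, an ideal of $A_{d,n}$. *)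

theory Defs
  imports Complex_Main
begin

datatype gen = Gg nat | Tt nat | Uu | Ui

text \<open>Elements of the free C-algebra: coefficient functions on words (lists of generators);
  all elements we build are finitely supported.\<close>
type_synonym fa = "gen list \<Rightarrow> complex"

definition fzero :: fa where "fzero = (\<lambda>_. 0)"
definition fone :: fa where "fone = (\<lambda>w. if w = [] then 1 else 0)"
definition fgen :: "gen \<Rightarrow> fa" where "fgen x = (\<lambda>w. if w = [x] then 1 else 0)"
definition fadd :: "fa \<Rightarrow> fa \<Rightarrow> fa" where "fadd f g = (\<lambda>w. f w + g w)"
definition fsub :: "fa \<Rightarrow> fa \<Rightarrow> fa" where "fsub f g = (\<lambda>w. f w - g w)"
definition fscale :: "complex \<Rightarrow> fa \<Rightarrow> fa" where "fscale c f = (\<lambda>w. c * f w)"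
definition fmul :: "fa \<Rightarrow> fa \<Rightarrow> fa" where
  "fmul f g = (\<lambda>w. \<Sum>k\<le>length w. f (take k w) * g (drop k w))"
definition fprod :: "fa list \<Rightarrow> fa" where "fprod xs = foldr fmul xs fone"
definition fpow :: "fa \<Rightarrow> nat \<Rightarrow> fa" where "fpow f k = fprod (replicate k f)"
definition fsumset :: "'a set \<Rightarrow> ('a \<Rightarrow> fa) \<Rightarrow> fa" where
  "fsumset F h = (\<lambda>w. \<Sum>x\<in>F. h x w)"

inductive_set fideal :: "fa set \<Rightarrow> fa set" for Rl :: "fa set" where
  zero: "fzero \<in> fideal Rl"
| gen: "r \<in> Rl \<Longrightarrow> r \<in> fideal Rl"
| add: "a \<in> fideal Rl \<Longrightarrow> b \<in> fideal Rl \<Longrightarrow> fadd a b \<in> fideal Rl"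
| scale: "a \<in> fideal Rl \<Longrightarrow> fscale c a \<in> fideal Rl"
| lmul: "a \<in> fideal Rl \<Longrightarrow> fmul (fgen x) a \<in> fideal Rl"
| rmul: "a \<in> fideal Rl \<Longrightarrow> fmul a (fgen x) \<in> fideal Rl"

section \<open>Defining relations of YTL_{d,n}(u) (over C[u,u^{-1}], u central invertible)\<close>

abbreviation gg :: "nat \<Rightarrow> fa" where "gg i \<equiv> fgen (Gg i)"
abbreviation tt :: "nat \<Rightarrow> fa" where "tt j \<equiv> fgen (Tt j)"
abbreviation uu :: fa where "uu \<equiv> fgen Uu"
abbreviation ui :: fa where "ui \<equiv> fgen Ui"

definition transp :: "nat \<Rightarrow> nat \<Rightarrow> nat" where
  "transp i j = (if j = i then i + 1 else if j = i + 1 then i else j)"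

text \<open>e_i = (1/d) sum_{s<d} t_i^s t_{i+1}^{-s}, with t^{-s} written as t^{(d-s) mod d} (t^d = 1).\<close>
definition ee :: "nat \<Rightarrow> nat \<Rightarrow> fa" where
  "ee d i = fscale (1 / of_nat d)
     (fsumset {0..<d} (\<lambda>s. fmul (fpow (tt i) s) (fpow (tt (i+1)) ((d - s) mod d))))"

definition ytl_rels :: "nat \<Rightarrow> nat \<Rightarrow> fa set" where
  "ytl_rels d n =
     {fsub (fmul uu ui) fone, fsub (fmul ui uu) fone}
   \<union> {fsub (fmul uu (fgen x)) (fmul (fgen x) uu) | x. True}
   \<union> {fsub (fmul ui (fgen x)) (fmul (fgen x) ui) | x. True}
   \<union> {gg i | i. \<not> (1 \<le> i \<and> i \<le> n - 1)}
   \<union> {tt j | j. \<not> (1 \<le> j \<and> j \<le> n)}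
   \<union> {fsub (fmul (gg i) (gg j)) (fmul (gg j) (gg i)) | i j.
        1 \<le> i \<and> i \<le> n - 1 \<and> 1 \<le> j \<and> j \<le> n - 1 \<and> (i + 1 < j \<or> j + 1 < i)}
   \<union> {fsub (fprod [gg i, gg (i+1), gg i]) (fprod [gg (i+1), gg i, gg (i+1)]) | i.
        1 \<le> i \<and> i + 2 \<le> n}
   \<union> {fsub (fmul (tt i) (tt j)) (fmul (tt j) (tt i)) | i j.
        1 \<le> i \<and> i \<le> n \<and> 1 \<le> j \<and> j \<le> n}
   \<union> {fsub (fmul (tt j) (gg i)) (fmul (gg i) (tt (transp i j))) | i j.
        1 \<le> i \<and> i \<le> n - 1 \<and> 1 \<le> j \<and> j \<le> n}
   \<union> {fsub (fpow (tt j) d) fone | j. 1 \<le> j \<and> j \<le> n}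
   \<union> {fsub (fmul (gg i) (gg i))
          (fadd fone (fadd (fmul (fsub uu fone) (ee d i))
                           (fmul (fmul (fsub uu fone) (ee d i)) (gg i)))) | i.
        1 \<le> i \<and> i \<le> n - 1}
   \<union> {fsumset {0..<6::nat} (\<lambda>k. [fprod [gg i, gg (i+1), gg i], fmul (gg i) (gg (i+1)),
          fmul (gg (i+1)) (gg i), gg i, gg (i+1), fone] ! k) | i.
        1 \<le> i \<and> i + 2 \<le> n}"

definition tmono :: "nat \<Rightarrow> (nat \<Rightarrow> nat) \<Rightarrow> fa" where
  "tmono n r = fprod (map (\<lambda>j. fpow (tt j) (r j)) [1..<n+1])"

definition tword :: "nat \<Rightarrow> (nat \<Rightarrow> nat) \<Rightarrow> nat list \<Rightarrow> fa" where
  "tword n r js = fmul (tmono n r) (fprod (map gg js))"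

definition exps :: "nat \<Rightarrow> nat \<Rightarrow> (nat \<Rightarrow> nat) set" where
  "exps d n = {r. \<forall>j. (1 \<le> j \<and> j \<le> n \<longrightarrow> r j < d) \<and> (\<not> (1 \<le> j \<and> j \<le> n) \<longrightarrow> r j = 0)}"

definition Tn :: "nat \<Rightarrow> (nat \<times> nat) list set" where
  "Tn n = {p. length p \<le> n - 1 \<and>
     (\<forall>(i,k)\<in>set p. 1 \<le> i \<and> i \<le> n - 1 \<and> k < i) \<and>
     sorted_wrt (<) (map fst p) \<and> sorted_wrt (<) (map (\<lambda>(i,k). i - k) p)}"

definition gik :: "(nat \<times> nat) list \<Rightarrow> fa" where
  "gik p = fprod (map (\<lambda>(i,k). fprod (map (\<lambda>m. gg (i - m)) [0..<k+1])) p)"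

definition gdeg :: "(nat \<times> nat) list \<Rightarrow> nat" where
  "gdeg p = sum_list (map (\<lambda>(i,k). k + 1) p)"

definition Slt :: "nat \<Rightarrow> nat \<Rightarrow> nat \<Rightarrow> fa set" where
  "Slt d n m = {fmul (tmono n r) (gik p) | r p. r \<in> exps d n \<and> p \<in> Tn n \<and> gdeg p < m}"

definition upow :: "int \<Rightarrow> fa" where
  "upow k = (if 0 \<le> k then fpow uu (nat k) else fpow ui (nat (- k)))"

text \<open>C[u,u^{-1}]-span (representatives in the free algebra).\<close>
definition Lspan :: "fa set \<Rightarrow> fa set" where
  "Lspan X = {fsumset F (\<lambda>(s,k). fscale (c (s,k)) (fmul (upow k) s)) | F c.
                finite F \<and> fst ` F \<subseteq> X}"

text \<open>A_{d,n}: complex group algebra of (Z/dZ)^n, elements as coefficient functions on exps.\<close>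
definition Adn :: "nat \<Rightarrow> nat \<Rightarrow> ((nat \<Rightarrow> nat) \<Rightarrow> complex) set" where
  "Adn d n = {P. \<forall>r. P r \<noteq> 0 \<longrightarrow> r \<in> exps d n}"

definition xvar :: "nat \<Rightarrow> nat \<Rightarrow> (nat \<Rightarrow> nat) \<Rightarrow> complex" where
  "xvar d j = (\<lambda>r. if r = (\<lambda>k. if k = j then 1 mod d else 0) then 1 else 0)"

definition evalA :: "nat \<Rightarrow> nat \<Rightarrow> ((nat \<Rightarrow> nat) \<Rightarrow> complex) \<Rightarrow> fa" where
  "evalA d n P = fsumset (exps d n) (\<lambda>r. fscale (P r) (tmono n r))"

text \<open>R(w) for the word w = t_1^{r_1}...t_n^{r_n} g_{j_1}...g_{j_m}.\<close>
definition Rset :: "nat \<Rightarrow> nat \<Rightarrow> (nat \<Rightarrow> nat) \<Rightarrow> nat list \<Rightarrow> ((nat \<Rightarrow> nat) \<Rightarrow> complex) set" where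
  "Rset d n r js = {P \<in> Adn d n. \<exists>y \<in> Lspan (Slt d n (length js)).
      fsub (fmul (evalA d n P) (tword n r js)) y \<in> fideal (ytl_rels d n)}"

end

theory Submission
  imports Defs "HOL-Library.Function_Algebras"
begin

text \<open>Let \<zeta> be a primitive d-th root of unity and decompose 1 into the joint spectral idempotents
  P of t_i, t_(i+1), t_j, t_(j+1), with eigenvalues \<zeta>^a, \<zeta>^b, \<zeta>^c, \<zeta>^e. On each P the element
  t_i + t_(i+1) - t_j - t_(j+1) acts by the scalar \<zeta>^a + \<zeta>^b - \<zeta>^c - \<zeta>^e.

  Sandwiched between spectral idempotents of three consecutive generators t_k, t_(k+1), t_(k+2),
  the defining relation of YTL kills the eigenvalue triples (x, y, z) with three distinct entries,
  and forces g_k = -1 on (x, x, z) and g_(k+1) = -1 on (x, y, y) when the entries differ.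
  Conjugation by g_m exchanges the eigenvalues of t_m and t_(m+1), and the quadratic relation
  makes g_m injective where they differ; so such vanishing statements travel from position k + 2
  to any position further away. Consequently, whenever the scalar is nonzero, either P = 0,
  or P g_i = -P, or P g_j = -P, and P g_i g_j lies in the span of the elements t^r g_k.\<close>

section \<open>The free algebra\<close>

lemma fmul_assoc: "fmul (fmul f g) h = fmul f (fmul g h)"
proof
  fix w :: "gen list"
  let ?N = "length w"
  define A where "A l k' = f (take l w) * g (take k' (drop l w)) * h (drop (l+k') w)" for l k'
  have "fmul (fmul f g) h w = (\<Sum>k\<le>?N. \<Sum>l\<le>k. A l (k - l))"
    unfolding fmul_def A_def
    by (auto simp: sum_distrib_right min_def drop_take intro!: sum.cong)
  also have "\<dots> = (\<Sum>(l,k')\<in>{(l,k'). l+k' \<le> ?N}. A l k')"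
    by (rule sum.triangle_reindex_eq[symmetric])
  also have "{(l,k'). l+k' \<le> ?N} = Sigma {..?N} (\<lambda>l. {..?N-l})" by auto
  also have "(\<Sum>(l,k')\<in>Sigma {..?N} (\<lambda>l. {..?N-l}). A l k') = (\<Sum>l\<le>?N. \<Sum>k'\<le>?N-l. A l k')"
    by (rule sum.Sigma[symmetric]) auto
  also have "\<dots> = fmul f (fmul g h) w"
    unfolding fmul_def A_def
    by (auto simp: sum_distrib_left mult.assoc add.commute intro!: sum.cong)
  finally show "fmul (fmul f g) h w = fmul f (fmul g h) w" .
qed

lemma fmul_one_left: "fmul fone f = f"
  by (rule ext) (simp add: fmul_def fone_def sum.atMost_shift)

lemma fmul_one_right: "fmul f fone = f"
proof
  fix w :: "gen list"
  have "fmul f fone w = (\<Sum>k\<le>length w. if k = length w then f w else 0)"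
    unfolding fmul_def fone_def by (intro sum.cong) auto
  then show "fmul f fone w = f w" by simp
qed

lemma fmul_add_left: "fmul (fadd a b) c = fadd (fmul a c) (fmul b c)"
  by (auto simp: fmul_def fadd_def algebra_simps sum.distrib)

lemma fmul_add_right: "fmul c (fadd a b) = fadd (fmul c a) (fmul c b)"
  by (auto simp: fmul_def fadd_def algebra_simps sum.distrib)

lemma fmul_scale_left: "fmul (fscale x a) c = fscale x (fmul a c)"
  by (auto simp: fmul_def fscale_def algebra_simps sum_distrib_left)

lemma fmul_scale_right: "fmul c (fscale x a) = fscale x (fmul c a)"
  by (auto simp: fmul_def fscale_def algebra_simps sum_distrib_left)

lemma fmul_zero_left: "fmul fzero c = fzero"
  by (auto simp: fmul_def fzero_def)

lemma fmul_zero_right: "fmul c fzero = fzero"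
  by (auto simp: fmul_def fzero_def)

lemma fadd_assoc: "fadd (fadd a b) c = fadd a (fadd b c)"
  by (auto simp: fadd_def)

lemma fsub_fzero: "fsub a fzero = a"
  by (auto simp: fsub_def fzero_def)

lemma fsub_eq_fadd_fscale: "fsub a b = fadd a (fscale (-1) b)"
  by (auto simp: fsub_def fadd_def fscale_def)

text \<open>The ideal fideal is only required to be closed under multiplication by generators; on the
  subalgebra generated by them it is a two-sided ideal.\<close>

inductive fpoly :: "fa \<Rightarrow> bool" where
  "fpoly fone" | "fpoly (fgen x)" | "fpoly fzero"
| "fpoly a \<Longrightarrow> fpoly b \<Longrightarrow> fpoly (fadd a b)"
| "fpoly a \<Longrightarrow> fpoly (fscale c a)"
| "fpoly a \<Longrightarrow> fpoly b \<Longrightarrow> fpoly (fmul a b)"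

lemma fpoly_fsub: "fpoly a \<Longrightarrow> fpoly b \<Longrightarrow> fpoly (fsub a b)"
  by (simp add: fsub_eq_fadd_fscale fpoly.intros)

lemma fpoly_fpow: "fpoly f \<Longrightarrow> fpoly (fpow f k)"
  by (induction k) (auto simp: fpow_def fprod_def intro: fpoly.intros)

lemma fideal_mult_left: "fpoly b \<Longrightarrow> a \<in> fideal R \<Longrightarrow> fmul b a \<in> fideal R"
proof (induction b arbitrary: a rule: fpoly.induct)
  case 1 then show ?case by (simp add: fmul_one_left)
next
  case (2 x) then show ?case by (simp add: fideal.lmul)
next
  case 3 then show ?case by (simp add: fmul_zero_left fideal.zero)
next
  case (4 a b) then show ?case by (simp add: fmul_add_left fideal.add)
next
  case (5 a c) then show ?case by (simp add: fmul_scale_left fideal.scale)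
next
  case (6 a b) then show ?case by (simp add: fmul_assoc)
qed

lemma fideal_mult_right: "fpoly b \<Longrightarrow> a \<in> fideal R \<Longrightarrow> fmul a b \<in> fideal R"
proof (induction b arbitrary: a rule: fpoly.induct)
  case 1 then show ?case by (simp add: fmul_one_right)
next
  case (2 x) then show ?case by (simp add: fideal.rmul)
next
  case 3 then show ?case by (simp add: fmul_zero_right fideal.zero)
next
  case (4 a b) then show ?case by (simp add: fmul_add_right fideal.add)
next
  case (5 a c) then show ?case by (simp add: fmul_scale_right fideal.scale)
next
  case (6 a b) then show ?case by (simp flip: fmul_assoc)
qed

typedef palg = "{f. fpoly f}"
  by (auto intro: fpoly.intros)

setup_lifting type_definition_palg

instantiation palg :: ring_1
begin
lift_definition zero_palg :: palg is fzero by (auto intro: fpoly.intros)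
lift_definition one_palg :: palg is fone by (auto intro: fpoly.intros)
lift_definition plus_palg :: "palg \<Rightarrow> palg \<Rightarrow> palg" is fadd by (auto intro: fpoly.intros)
lift_definition minus_palg :: "palg \<Rightarrow> palg \<Rightarrow> palg" is fsub by (auto intro: fpoly_fsub)
lift_definition uminus_palg :: "palg \<Rightarrow> palg" is "fscale (-1)" by (auto intro: fpoly.intros)
lift_definition times_palg :: "palg \<Rightarrow> palg \<Rightarrow> palg" is fmul by (auto intro: fpoly.intros)
instance
proof
  fix a b c :: palg
  show "a * b * c = a * (b * c)" by transfer (simp add: fmul_assoc)
  show "1 * a = a" by transfer (simp add: fmul_one_left)
  show "a * 1 = a" by transfer (simp add: fmul_one_right)
  show "(a + b) * c = a * c + b * c" by transfer (simp add: fmul_add_left)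
  show "a * (b + c) = a * b + a * c" by transfer (simp add: fmul_add_right)
  show "a + b + c = a + (b + c)" by transfer (auto simp: fadd_def)
  show "a + b = b + a" by transfer (auto simp: fadd_def)
  show "0 + a = a" by transfer (auto simp: fadd_def fzero_def)
  show "- a + a = 0" by transfer (auto simp: fadd_def fzero_def fscale_def)
  show "a - b = a + - b" by transfer (auto simp: fadd_def fsub_def fscale_def)
  show "(0::palg) \<noteq> 1" by transfer (auto simp: fzero_def fone_def fun_eq_iff)
qed
end

lemma Rep_palg_zero: "Rep_palg 0 = fzero" by transfer simp
lemma Rep_palg_one: "Rep_palg 1 = fone" by transfer simp
lemma Rep_palg_add: "Rep_palg (a + b) = fadd (Rep_palg a) (Rep_palg b)" by transfer simp
lemma Rep_palg_diff: "Rep_palg (a - b) = fsub (Rep_palg a) (Rep_palg b)" by transfer simp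
lemma Rep_palg_uminus: "Rep_palg (- a) = fscale (-1) (Rep_palg a)" by transfer simp
lemma Rep_palg_mult: "Rep_palg (a * b) = fmul (Rep_palg a) (Rep_palg b)" by transfer simp
lemma Rep_palg_fpoly: "fpoly (Rep_palg a)" by transfer simp

lemma Rep_palg_power: "Rep_palg (x ^ k) = fpow (Rep_palg x) k"
  by (induction k) (simp_all add: fpow_def fprod_def Rep_palg_one Rep_palg_mult)

lemma Rep_palg_sum: "Rep_palg (sum f S) = fsumset S (\<lambda>s. Rep_palg (f s))"
  by (induction S rule: infinite_finite_induct)
     (simp_all add: Rep_palg_zero Rep_palg_add fsumset_def fzero_def fadd_def)

lemma Rep_palg_Abs_palg: "fpoly f \<Longrightarrow> Rep_palg (Abs_palg f) = f"
  by (simp add: Abs_palg_inverse)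

section \<open>The product of all Yokonuma--Temperley--Lieb algebras\<close>

text \<open>Types cannot depend on d and n, so we work in the product, over all parameters (d, n), of
  the quotients of palg by fideal (ytl_rels d n).\<close>

definition ytl_equiv :: "(nat \<times> nat \<Rightarrow> palg) \<Rightarrow> (nat \<times> nat \<Rightarrow> palg) \<Rightarrow> bool" where
  "ytl_equiv x y \<longleftrightarrow> (\<forall>d n. Rep_palg (x (d, n) - y (d, n)) \<in> fideal (ytl_rels d n))"

lemma ytl_equiv_refl: "ytl_equiv x x"
  by (simp add: ytl_equiv_def Rep_palg_zero fideal.zero)

lemma ytl_equiv_uminus: "ytl_equiv x y \<Longrightarrow> ytl_equiv (- x) (- y)"
proof (unfold ytl_equiv_def, intro allI)
  fix d n assume "\<forall>d n. Rep_palg (x (d, n) - y (d, n)) \<in> fideal (ytl_rels d n)"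
  then have "Rep_palg (- (x (d, n) - y (d, n))) \<in> fideal (ytl_rels d n)"
    unfolding Rep_palg_uminus by (simp add: fideal.scale)
  moreover have "(- x) (d, n) - (- y) (d, n) = - (x (d, n) - y (d, n))" by simp
  ultimately show "Rep_palg ((- x) (d, n) - (- y) (d, n)) \<in> fideal (ytl_rels d n)"
    by (simp only:)
qed

lemma ytl_equiv_add: "ytl_equiv x x' \<Longrightarrow> ytl_equiv y y' \<Longrightarrow> ytl_equiv (x + y) (x' + y')"
proof (unfold ytl_equiv_def, intro allI)
  fix d n
  assume "\<forall>d n. Rep_palg (x (d, n) - x' (d, n)) \<in> fideal (ytl_rels d n)"
     "\<forall>d n. Rep_palg (y (d, n) - y' (d, n)) \<in> fideal (ytl_rels d n)"
  then have "Rep_palg ((x (d, n) - x' (d, n)) + (y (d, n) - y' (d, n))) \<in> fideal (ytl_rels d n)"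
    by (simp only: Rep_palg_add fideal.add)
  then show "Rep_palg ((x + y) (d, n) - (x' + y') (d, n)) \<in> fideal (ytl_rels d n)"
    by (simp add: algebra_simps)
qed

lemma ytl_equiv_mult: "ytl_equiv x x' \<Longrightarrow> ytl_equiv y y' \<Longrightarrow> ytl_equiv (x * y) (x' * y')"
proof (unfold ytl_equiv_def, intro allI)
  fix d n
  assume "\<forall>d n. Rep_palg (x (d, n) - x' (d, n)) \<in> fideal (ytl_rels d n)"
     "\<forall>d n. Rep_palg (y (d, n) - y' (d, n)) \<in> fideal (ytl_rels d n)"
  then have "Rep_palg ((x (d, n) - x' (d, n)) * y (d, n) + x' (d, n) * (y (d, n) - y' (d, n)))
      \<in> fideal (ytl_rels d n)"
    by (simp only: Rep_palg_add Rep_palg_mult fideal.add fideal_mult_left fideal_mult_right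
        Rep_palg_fpoly)
  then show "Rep_palg ((x * y) (d, n) - (x' * y') (d, n)) \<in> fideal (ytl_rels d n)"
    by (simp add: algebra_simps)
qed

lemma equivp_ytl_equiv: "equivp ytl_equiv"
proof (rule equivpI)
  show "reflp ytl_equiv" by (rule reflpI) (rule ytl_equiv_refl)
  show "symp ytl_equiv"
  proof (rule sympI)
    fix x y assume "ytl_equiv x y"
    then have "ytl_equiv (- x + y) (- y + y)"
      by (intro ytl_equiv_add ytl_equiv_uminus ytl_equiv_refl)
    then show "ytl_equiv y x" by (simp add: ytl_equiv_def)
  qed
  show "Relation.transp ytl_equiv"
  proof (rule transpI)
    fix x y z assume "ytl_equiv x y" "ytl_equiv y z"
    then have "ytl_equiv (x + y) (y + z)" by (rule ytl_equiv_add)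
    then show "ytl_equiv x z" by (simp add: ytl_equiv_def)
  qed
qed

quotient_type ytl_prod = "nat \<times> nat \<Rightarrow> palg" / ytl_equiv
  by (rule equivp_ytl_equiv)

instantiation ytl_prod :: "{ring, monoid_mult}"
begin
lift_definition zero_ytl_prod :: ytl_prod is 0 .
lift_definition one_ytl_prod :: ytl_prod is 1 .
lift_definition plus_ytl_prod :: "ytl_prod \<Rightarrow> ytl_prod \<Rightarrow> ytl_prod" is "(+)"
  by (rule ytl_equiv_add)
lift_definition uminus_ytl_prod :: "ytl_prod \<Rightarrow> ytl_prod" is uminus
  by (rule ytl_equiv_uminus)
lift_definition minus_ytl_prod :: "ytl_prod \<Rightarrow> ytl_prod \<Rightarrow> ytl_prod" is "(-)"
  by (simp only: diff_conv_add_uminus ytl_equiv_add ytl_equiv_uminus)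
lift_definition times_ytl_prod :: "ytl_prod \<Rightarrow> ytl_prod \<Rightarrow> ytl_prod" is "(*)"
  by (rule ytl_equiv_mult)
instance
  by standard (transfer; simp add: algebra_simps ytl_equiv_refl)+
end

section \<open>Roots of unity\<close>

definition zeta :: "nat \<Rightarrow> complex" where "zeta d = cis (2 * pi / real d)"

lemma zeta_power_d: "0 < d \<Longrightarrow> zeta d ^ d = 1"
  by (simp add: zeta_def DeMoivre)

lemma zeta_nonzero: "zeta d \<noteq> 0"
  by (simp add: zeta_def)

lemma zeta_power_power_d: "0 < d \<Longrightarrow> (zeta d ^ a) ^ d = 1"
  by (metis mult.commute power_mult zeta_power_d power_one)

lemma zeta_power_neq_one:
  assumes "0 < a" "a < d"
  shows "zeta d ^ a \<noteq> 1"
proof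
  assume "zeta d ^ a = 1"
  then have "cos (real a * (2 * pi / real d)) = 1"
    by (metis DeMoivre Re_complex_of_real cis.sel(1) complex_of_real_def one_complex.sel(1) zeta_def)
  then obtain m :: int where "real a * (2 * pi / real d) = of_int m * 2 * pi"
    using cos_one_2pi_int by auto
  then have "real a / real d = m" using assms by (simp add: field_simps)
  moreover have "0 < real a / real d" "real a / real d < 1" using assms by auto
  ultimately show False by simp
qed

lemma zeta_power_inj:
  assumes "a < d" "b < d" "zeta d ^ a = zeta d ^ b"
  shows "a = b"
proof (rule ccontr)
  have less: False if ab: "a < b" "b < d" "zeta d ^ a = zeta d ^ b" for a b
  proof -
    have "zeta d ^ b = zeta d ^ a * zeta d ^ (b - a)"
      by (metis ab(1) le_add_diff_inverse less_imp_le power_add)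
    then have "zeta d ^ (b - a) = 1" using ab zeta_nonzero by simp
    with zeta_power_neq_one[of "b - a" d] ab show False by linarith
  qed
  assume "a \<noteq> b"
  with assms less show False by (metis linorder_neqE_nat)
qed

lemma sum_zeta_ratio_powers:
  assumes "a < d" "b < d"
  shows "(\<Sum>s<d. (zeta d ^ b / zeta d ^ a) ^ s) = (if a = b then of_nat d else 0)"
proof -
  let ?w = "zeta d ^ b / zeta d ^ a"
  have "?w ^ d = 1" using assms by (simp add: power_divide zeta_power_power_d)
  moreover have "?w = 1 \<longleftrightarrow> a = b"
    using zeta_power_inj[OF assms] zeta_nonzero by (auto simp: field_simps)
  ultimately show ?thesis by (auto simp: sum_gp_strict)
qed

lemma power_mod_complement:
  fixes x :: complex
  assumes "x ^ d = 1" "s < d"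
  shows "x ^ ((d - s) mod d) = inverse (x ^ s)"
proof (cases "s = 0")
  case False
  with assms have "x ^ s * x ^ ((d - s) mod d) = 1"
    by (simp flip: power_add)
  then show ?thesis by (rule inverse_unique[symmetric])
qed simp

section \<open>Algebras satisfying the defining relations\<close>

lemma commute_sum:
  fixes x :: "'a::semiring_0"
  shows "(\<And>i. i \<in> A \<Longrightarrow> x * f i = f i * x) \<Longrightarrow> x * sum f A = sum f A * x"
  unfolding sum_distrib_left sum_distrib_right by (rule sum.cong) auto

lemma commute_prod_list:
  fixes a :: "'a::monoid_mult"
  shows "(\<And>x. x \<in> set xs \<Longrightarrow> a * x = x * a) \<Longrightarrow> a * prod_list xs = prod_list xs * a"
proof (induction xs)
  case (Cons x xs)
  then have "a * x = x * a" "a * prod_list xs = prod_list xs * a" by auto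
  then show ?case by (simp add: mult.assoc[symmetric]) (simp add: mult.assoc)
qed simp

lemma commute_mult:
  fixes a b x :: "'a::semigroup_mult"
  shows "a * x = x * a \<Longrightarrow> b * x = x * b \<Longrightarrow> (a * b) * x = x * (a * b)"
  by (metis mult.assoc)

lemma commute_add_one:
  fixes a x :: "'a::{ring, monoid_mult}"
  shows "a * x = x * a \<Longrightarrow> (a + 1) * x = x * (a + 1)"
  by (simp add: distrib_left distrib_right)

lemma power_intertwine:
  fixes a x b :: "'a::monoid_mult"
  assumes "a * x = x * b"
  shows "a ^ s * x = x * b ^ s"
proof (induction s)
  case (Suc s)
  have "a ^ Suc s * x = a * (a ^ s * x)" by (simp add: mult.assoc)
  also have "\<dots> = (a * x) * b ^ s" using Suc by (simp add: mult.assoc)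
  also have "\<dots> = x * b ^ Suc s" using assms by (simp add: mult.assoc power_Suc)
  finally show ?case .
qed simp

lemma mult3_interleave:
  fixes a b c a' b' c' :: "'a::semigroup_mult"
  assumes "c * a' = a' * c" "b * a' = a' * b" "c * b' = b' * c"
  shows "a * b * c * (a' * b' * c') = (a * a') * (b * b') * (c * c')"
proof -
  have "a * b * c * (a' * b' * c') = a * (b * ((c * a') * (b' * c')))" by (simp add: mult.assoc)
  also have "\<dots> = a * ((b * a') * (c * (b' * c')))" by (simp add: assms(1) mult.assoc)
  also have "\<dots> = a * (a' * (b * ((c * b') * c')))" by (simp add: assms(2) mult.assoc)
  also have "\<dots> = (a * a') * (b * b') * (c * c')" by (simp add: assms(3) mult.assoc)
  finally show ?thesis .
qed

text \<open>The ambient ring may be trivial, so it is not required to satisfy 0 \<noteq> 1; C embeds the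
  scalars into its centre.\<close>

locale ytl_relations =
  fixes T G :: "nat \<Rightarrow> 'a::{ring, monoid_mult}" and U :: 'a and C :: "complex \<Rightarrow> 'a"
    and d n :: nat and ei :: "nat \<Rightarrow> 'a"
  defines "ei \<equiv> \<lambda>k. C (1 / of_nat d) * (\<Sum>s\<in>{0..<d}. T k ^ s * T (k+1) ^ ((d - s) mod d))"
  assumes d_pos: "0 < d"
    and C_add: "C (x + y) = C x + C y"
    and C_mult: "C (x * y) = C x * C y"
    and C_one: "C 1 = 1"
    and C_commute: "C x * a = a * C x"
    and T_commute: "\<lbrakk>1 \<le> m; m \<le> n; 1 \<le> m'; m' \<le> n\<rbrakk> \<Longrightarrow> T m * T m' = T m' * T m"
    and T_power_d: "\<lbrakk>1 \<le> m; m \<le> n\<rbrakk> \<Longrightarrow> T m ^ d = 1"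
    and T_mult_G: "\<lbrakk>1 \<le> k; k \<le> n - 1; 1 \<le> m; m \<le> n\<rbrakk> \<Longrightarrow> T m * G k = G k * T (transp k m)"
    and G_commute_far: "\<lbrakk>1 \<le> k; k \<le> n - 1; 1 \<le> k'; k' \<le> n - 1; k + 1 < k' \<or> k' + 1 < k\<rbrakk>
      \<Longrightarrow> G k * G k' = G k' * G k"
    and G_square: "\<lbrakk>1 \<le> k; k \<le> n - 1\<rbrakk> \<Longrightarrow> G k * G k = 1 + (U - 1) * ei k + (U - 1) * ei k * G k"
    and ytl_relation: "\<lbrakk>1 \<le> k; k + 2 \<le> n\<rbrakk> \<Longrightarrow>
      G k * G (k+1) * G k + G k * G (k+1) + G (k+1) * G k + G k + G (k+1) + 1 = 0"
begin

lemma C_zero: "C 0 = 0"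
  using C_add[of 0 0] by simp

lemma C_minus: "C (- x) = - C x"
  using C_add[of x "- x"] by (simp add: C_zero add_eq_0_iff)

lemma C_diff: "C (x - y) = C x - C y"
  using C_add[of "x - y" y] by (simp add: eq_diff_eq)

lemma C_sum: "C (sum f A) = (\<Sum>x\<in>A. C (f x))"
  by (induction A rule: infinite_finite_induct) (auto simp: C_zero C_add)

lemma C_left_commute: "C x * (a * b) = a * (C x * b)"
  by (metis C_commute mult.assoc)

lemma C_mult_C: "C x * (C y * b) = C (x * y) * b"
  by (simp add: C_mult mult.assoc)

lemma commute_C_mult: "x * S = S * x \<Longrightarrow> x * (C c * S) = (C c * S) * x"
  by (metis C_commute mult.assoc)

text \<open>The spectral idempotent of T m for the eigenvalue zeta d ^ a.\<close>

definition proj :: "nat \<Rightarrow> nat \<Rightarrow> 'a" where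
  "proj m a = C (1 / of_nat d) * (\<Sum>s<d. C (inverse (zeta d ^ a) ^ s) * T m ^ s)"

lemma commute_proj:
  assumes "x * T m = T m * x"
  shows "x * proj m a = proj m a * x"
proof -
  have "x * T m ^ s = T m ^ s * x" for s
    using power_commuting_commutes[OF assms[symmetric]] by simp
  then show ?thesis unfolding proj_def by (intro commute_C_mult commute_sum)
qed

lemma T_proj_commute:
  "1 \<le> m \<Longrightarrow> m \<le> n \<Longrightarrow> 1 \<le> m' \<Longrightarrow> m' \<le> n \<Longrightarrow> T m' * proj m a = proj m a * T m'"
  by (rule commute_proj) (rule T_commute)

lemma proj_commute:
  "1 \<le> m \<Longrightarrow> m \<le> n \<Longrightarrow> 1 \<le> m' \<Longrightarrow> m' \<le> n \<Longrightarrow> proj m' b * proj m a = proj m a * proj m' b"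
  by (rule commute_proj) (metis T_proj_commute)

lemma T_mult_eigensum:
  fixes a :: nat
  assumes m: "1 \<le> m" "m \<le> n"
  defines "z \<equiv> inverse (zeta d ^ a)"
  shows "T m * (\<Sum>s<d. C (z ^ s) * T m ^ s) = C (zeta d ^ a) * (\<Sum>s<d. C (z ^ s) * T m ^ s)"
proof -
  obtain d' where d': "d = Suc d'" using d_pos by (cases d) auto
  have shift: "zeta d ^ a * z ^ Suc s = z ^ s" for s
    by (simp add: z_def zeta_nonzero)
  have "zeta d ^ a * (zeta d ^ a) ^ d' = 1"
    using zeta_power_power_d[OF d_pos, of a] by (simp add: d')
  then have z_d': "z ^ d' = zeta d ^ a"
    unfolding z_def power_inverse by (metis inverse_unique inverse_inverse_eq)
  have "T m * (\<Sum>s<d. C (z ^ s) * T m ^ s) = (\<Sum>s<d. C (z ^ s) * T m ^ Suc s)"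
    by (simp add: sum_distrib_left C_left_commute[where a="T m"])
  also have "\<dots> = (\<Sum>s<d'. C (z ^ s) * T m ^ Suc s) + C (z ^ d') * T m ^ d"
    by (simp add: d')
  also have "\<dots> = C (zeta d ^ a * z ^ 0) * T m ^ 0 + (\<Sum>s<d'. C (zeta d ^ a * z ^ Suc s) * T m ^ Suc s)"
    by (simp only: T_power_d[OF m] z_d' shift power_0 mult_1_right mult_1_left add.commute)
  also have "\<dots> = (\<Sum>s<Suc d'. C (zeta d ^ a * z ^ s) * T m ^ s)"
    by (simp only: sum.lessThan_Suc_shift)
  also have "\<dots> = C (zeta d ^ a) * (\<Sum>s<d. C (z ^ s) * T m ^ s)"
    by (simp only: d'[symmetric] sum_distrib_left C_mult mult.assoc)
  finally show ?thesis .
qed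

lemma T_mult_proj:
  assumes "1 \<le> m" "m \<le> n"
  shows "T m * proj m a = C (zeta d ^ a) * proj m a"
  unfolding proj_def C_left_commute[where a="T m", symmetric] T_mult_eigensum[OF assms]
  by (simp only: C_mult_C mult.commute)

lemma T_power_mult_proj:
  assumes m: "1 \<le> m" "m \<le> n"
  shows "T m ^ s * proj m a = C ((zeta d ^ a) ^ s) * proj m a"
proof (induction s)
  case 0 then show ?case by (simp add: C_one)
next
  case (Suc s)
  have "T m ^ Suc s * proj m a = C ((zeta d ^ a) ^ s) * (T m * proj m a)"
    using Suc by (simp add: mult.assoc C_left_commute[where a="T m"])
  then show ?case
    by (simp add: T_mult_proj[OF m] C_mult_C mult.commute)
qed

lemma sum_proj: "(\<Sum>a<d. proj m a) = 1"
proof -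
  have orth: "C (\<Sum>a<d. inverse (zeta d ^ a) ^ s) * T m ^ s = (if s = 0 then C (of_nat d) else 0)"
    if "s < d" for s
  proof -
    have "inverse (zeta d ^ a) ^ s = (zeta d ^ 0 / zeta d ^ s) ^ a" for a
      by (simp add: power_inverse divide_inverse flip: power_mult) (simp add: mult.commute)
    then show ?thesis using sum_zeta_ratio_powers[OF that d_pos] by (auto simp: C_zero)
  qed
  have "(\<Sum>a<d. proj m a) = C (1 / of_nat d) * (\<Sum>s<d. C (\<Sum>a<d. inverse (zeta d ^ a) ^ s) * T m ^ s)"
    unfolding proj_def
    by (simp add: sum_distrib_left C_sum sum_distrib_right) (rule sum.swap)
  also have "\<dots> = C (1 / of_nat d) * C (of_nat d)"
    using d_pos by (simp add: orth)
  finally show ?thesis using d_pos by (simp add: C_mult[symmetric] C_one)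
qed

lemma proj_mult_proj:
  assumes m: "1 \<le> m" "m \<le> n" and ab: "a < d" "b < d"
  shows "proj m a * proj m b = (if a = b then proj m a else 0)"
proof -
  have "proj m a * proj m b
      = C (1 / of_nat d) * (\<Sum>s<d. C (inverse (zeta d ^ a) ^ s * (zeta d ^ b) ^ s) * proj m b)"
    unfolding proj_def[of m a]
    by (simp add: sum_distrib_right mult.assoc T_power_mult_proj[OF m] C_mult_C)
  also have "\<dots> = C (1 / of_nat d * (\<Sum>s<d. (zeta d ^ b / zeta d ^ a) ^ s)) * proj m b"
    by (simp add: C_sum sum_distrib_right C_mult_C sum_distrib_left power_divide divide_inverse
        power_inverse mult.commute power_mult_distrib)
  finally show ?thesis
    using d_pos by (simp add: sum_zeta_ratio_powers[OF ab] C_one C_zero)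
qed

lemma proj_intertwine:
  assumes "T m * X = X * T m'"
  shows "proj m a * X = X * proj m' a"
proof -
  have "T m ^ s * X = X * T m' ^ s" for s
    using assms by (rule power_intertwine)
  then have "(C c * T m ^ s) * X = X * (C c * T m' ^ s)" for c s
    by (simp add: mult.assoc C_left_commute[where a=X])
  then show ?thesis
    unfolding proj_def by (simp add: sum_distrib_right sum_distrib_left mult.assoc C_left_commute[where a=X])
qed

lemma proj_mult_G:
  "1 \<le> k \<Longrightarrow> k \<le> n - 1 \<Longrightarrow> 1 \<le> m \<Longrightarrow> m \<le> n \<Longrightarrow> proj m a * G k = G k * proj (transp k m) a"
  by (rule proj_intertwine) (rule T_mult_G)

lemma proj_mult_G_mult:
  "1 \<le> k \<Longrightarrow> k \<le> n - 1 \<Longrightarrow> 1 \<le> m \<Longrightarrow> m \<le> n \<Longrightarrow>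
    proj m a * (G k * r) = G k * (proj (transp k m) a * r)"
  by (simp add: mult.assoc[symmetric] proj_mult_G)

lemma commute_ei:
  assumes "x * T k = T k * x" "x * T (k+1) = T (k+1) * x"
  shows "x * ei k = ei k * x"
proof -
  have "x * (T k ^ s * T (k+1) ^ t) = (T k ^ s * T (k+1) ^ t) * x" for s t
    using power_commuting_commutes[OF assms(1)[symmetric]] power_commuting_commutes[OF assms(2)[symmetric]]
    by (metis mult.assoc)
  then show ?thesis unfolding ei_def by (intro commute_C_mult commute_sum) auto
qed

lemma T_powers_mult_proj_proj:
  assumes "1 \<le> k" "k + 1 \<le> n"
  shows "T k ^ s * T (k+1) ^ t * (proj k a * proj (k+1) b)
    = C ((zeta d ^ a) ^ s * (zeta d ^ b) ^ t) * (proj k a * proj (k+1) b)"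
proof -
  have "T (k+1) ^ t * proj k a = proj k a * T (k+1) ^ t"
    using power_commuting_commutes[OF T_proj_commute[of k "k+1" a]] assms by simp
  then have "T k ^ s * T (k+1) ^ t * (proj k a * proj (k+1) b)
      = (T k ^ s * proj k a) * (T (k+1) ^ t * proj (k+1) b)"
    by (metis mult.assoc)
  also have "\<dots> = C ((zeta d ^ a) ^ s * (zeta d ^ b) ^ t) * (proj k a * proj (k+1) b)"
    using assms by (simp add: T_power_mult_proj C_left_commute[where a="T k ^ s"]
        C_left_commute[where a="proj k a"] C_mult_C mult.assoc)
  finally show ?thesis .
qed

text \<open>Orthogonality of characters: ei k projects onto equal eigenvalues of T k and T (k+1).\<close>

lemma ei_mult_proj_proj:
  assumes k: "1 \<le> k" "k + 1 \<le> n" and ab: "a < d" "b < d" "a \<noteq> b"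
  shows "ei k * (proj k a * proj (k+1) b) = 0"
proof -
  let ?D = "proj k a * proj (k+1) b"
  have "T k ^ s * T (k+1) ^ ((d - s) mod d) * ?D = C ((zeta d ^ a / zeta d ^ b) ^ s) * ?D"
    if "s < d" for s
    using that by (simp only: T_powers_mult_proj_proj[OF k] power_mod_complement zeta_power_power_d[OF d_pos])
       (simp add: power_divide divide_inverse power_mult_distrib power_inverse)
  then have "ei k * ?D = C (1 / of_nat d) * (\<Sum>s<d. C ((zeta d ^ a / zeta d ^ b) ^ s) * ?D)"
    unfolding ei_def atLeast0LessThan mult.assoc sum_distrib_right by simp
  also have "\<dots> = C (1 / of_nat d * (\<Sum>s<d. (zeta d ^ a / zeta d ^ b) ^ s)) * ?D"
    by (simp only: C_mult C_sum sum_distrib_right mult.assoc)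
  finally show ?thesis using sum_zeta_ratio_powers[of b d a] ab by (simp add: C_zero)
qed

lemma zero_if_G_ei_annihilate:
  assumes k: "1 \<le> k" "k \<le> n - 1" and "G k * X = 0" "ei k * X = 0"
  shows "X = 0"
proof -
  have "G k * (G k * X) = (G k * G k) * X" by (simp only: mult.assoc)
  also have "\<dots> = X + (U - 1) * (ei k * X) + (U - 1) * (ei k * (G k * X))"
    by (simp only: G_square[OF k] distrib_right mult.assoc mult_1_left)
  finally show ?thesis using assms by simp
qed

definition proj3 :: "nat \<Rightarrow> nat \<Rightarrow> nat \<Rightarrow> nat \<Rightarrow> 'a" where
  "proj3 k x y z = proj k x * proj (k+1) y * proj (k+2) z"

context
  fixes k :: nat
  assumes k: "1 \<le> k" "k + 2 \<le> n"
begin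

lemma proj3_mult_G: "proj3 k x y z * G k = G k * proj3 k y x z"
proof -
  have "proj3 k x y z * G k = G k * (proj (k+1) x * (proj k y * proj (k+2) z))"
    unfolding proj3_def using k by (simp add: mult.assoc proj_mult_G proj_mult_G_mult transp_def)
  also have "\<dots> = G k * proj3 k y x z"
    unfolding proj3_def using k by (simp add: mult.assoc[symmetric] proj_commute)
  finally show ?thesis .
qed

lemma proj3_mult_G_Suc: "proj3 k x y z * G (Suc k) = G (Suc k) * proj3 k x z y"
proof -
  have "proj3 k x y z * G (Suc k) = G (Suc k) * (proj k x * (proj (k+2) y * proj (k+1) z))"
    unfolding proj3_def using k by (simp add: mult.assoc proj_mult_G proj_mult_G_mult transp_def)
  also have "\<dots> = G (Suc k) * proj3 k x z y"
    unfolding proj3_def using k by (simp add: mult.assoc proj_commute)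
  finally show ?thesis .
qed

lemma proj3_mult_proj3:
  assumes "x < d" "y < d" "z < d" "x' < d" "y' < d" "z' < d"
  shows "proj3 k x y z * proj3 k x' y' z' = (if x = x' \<and> y = y' \<and> z = z' then proj3 k x y z else 0)"
proof -
  have "proj3 k x y z * proj3 k x' y' z'
      = (proj k x * proj k x') * (proj (k+1) y * proj (k+1) y') * (proj (k+2) z * proj (k+2) z')"
    unfolding proj3_def using k by (intro mult3_interleave) (simp_all add: proj_commute)
  then show ?thesis
    using k assms by (simp add: proj_mult_proj proj3_def)
qed

text \<open>The defining relation of YTL between two copies of proj3 k x y z, with the g's moved to
  the left.\<close>

lemma proj3_ytl_relation:
  assumes "x < d" "y < d" "z < d"
  shows "G k * (G (Suc k) * (G k * (proj3 k z y x * proj3 k x y z)))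
    + G k * (G (Suc k) * (proj3 k y z x * proj3 k x y z))
    + G (Suc k) * (G k * (proj3 k z x y * proj3 k x y z))
    + G k * (proj3 k y x z * proj3 k x y z) + G (Suc k) * (proj3 k x z y * proj3 k x y z)
    + proj3 k x y z * proj3 k x y z = 0"
proof -
  have G_mult: "proj3 k x y z * (G k * r) = G k * (proj3 k y x z * r)"
    and G_Suc_mult: "proj3 k x y z * (G (Suc k) * r) = G (Suc k) * (proj3 k x z y * r)"
    for x y z r by (simp_all add: mult.assoc[symmetric] proj3_mult_G proj3_mult_G_Suc)
  have "proj3 k x y z * (G k * G (Suc k) * G k + G k * G (Suc k) + G (Suc k) * G k + G k
      + G (Suc k) + 1) * proj3 k x y z = 0"
    using ytl_relation[of k] k by simp
  then show ?thesis
    by (simp add: distrib_left distrib_right mult.assoc G_mult G_Suc_mult proj3_mult_G proj3_mult_G_Suc)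
qed

lemma proj3_distinct:
  assumes "x < d" "y < d" "z < d" "x \<noteq> y" "y \<noteq> z" "x \<noteq> z"
  shows "proj3 k x y z = 0"
  using proj3_ytl_relation[of x y z] assms by (simp add: proj3_mult_proj3)

lemma G_add_one_mult_proj3:
  assumes "x < d" "z < d" "x \<noteq> z"
  shows "(G k + 1) * proj3 k x x z = 0"
  using proj3_ytl_relation[of x x z] assms by (simp add: proj3_mult_proj3 distrib_right add.commute)

lemma G_Suc_add_one_mult_proj3:
  assumes "x < d" "y < d" "x \<noteq> y"
  shows "(G (Suc k) + 1) * proj3 k x y y = 0"
  using proj3_ytl_relation[of x y y] assms by (simp add: proj3_mult_proj3 distrib_right add.commute)

end

lemma zero_if_mult_proj_zero:
  assumes "\<And>g. g < d \<Longrightarrow> W * proj m g = 0"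
  shows "W = 0"
proof -
  have "W = W * (\<Sum>g<d. proj m g)" by (simp add: sum_proj)
  also have "\<dots> = 0" by (simp add: sum_distrib_left assms)
  finally show ?thesis .
qed

text \<open>Conjugation by G m exchanges the eigenvalues of T m and T (Suc m), and G m is injective
  where they differ. This transports the vanishing of W * proj m c along the indices.\<close>

lemma annihilate_proj_swap:
  assumes m: "1 \<le> m" "Suc m \<le> n" and xy: "x < d" "y < d" "x \<noteq> y"
    and comm: "W * G m = G m * W" "W * T m = T m * W" "W * T (Suc m) = T (Suc m) * W"
    and swapped: "W * (proj (Suc m) x * proj m y) = 0"
  shows "W * (proj m x * proj (Suc m) y) = 0"
proof (rule zero_if_G_ei_annihilate[of m])
  show "1 \<le> m" "m \<le> n - 1" using m by auto
  have "proj (Suc m) x * proj m y * G m = proj (Suc m) x * (G m * proj (Suc m) y)"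
    using m by (simp add: mult.assoc proj_mult_G transp_def)
  also have "\<dots> = G m * (proj m x * proj (Suc m) y)"
    using m by (simp add: mult.assoc[symmetric] proj_mult_G transp_def)
  finally have "G m * (W * (proj m x * proj (Suc m) y)) = W * (proj (Suc m) x * proj m y) * G m"
    by (metis comm(1) mult.assoc)
  then show "G m * (W * (proj m x * proj (Suc m) y)) = 0"
    using swapped by simp
  have "W * ei m = ei m * W" using commute_ei comm(2,3) by simp
  then show "ei m * (W * (proj m x * proj (Suc m) y)) = 0"
    using ei_mult_proj_proj[of m x y] m xy by (metis mult.assoc mult_zero_right Suc_eq_plus1)
qed

lemma proj_annihilator_shift:
  assumes m: "1 \<le> m" "Suc m \<le> n" and c: "c < d"
    and comm: "W * G m = G m * W" "W * T m = T m * W" "W * T (Suc m) = T (Suc m) * W"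
  shows "W * proj m c = 0 \<longleftrightarrow> W * proj (Suc m) c = 0"
proof -
  have swap: "proj (Suc m) x * proj m y = proj m y * proj (Suc m) x" for x y
    using m by (simp add: proj_commute)
  show ?thesis
  proof
    assume zero: "W * proj m c = 0"
    show "W * proj (Suc m) c = 0"
    proof (rule zero_if_mult_proj_zero[where m=m])
      fix g assume g: "g < d"
      show "W * proj (Suc m) c * proj m g = 0"
      proof (cases "g = c")
        case True
        then show ?thesis using zero by (simp add: mult.assoc swap) (simp add: mult.assoc[symmetric])
      next
        case False
        have "W * (proj (Suc m) g * proj m c) = 0"
          using zero by (simp add: swap flip: mult.assoc)
        with annihilate_proj_swap[OF m g c False comm] show ?thesis
          by (simp add: mult.assoc swap)
      qed
    qed
  next
    assume zero: "W * proj (Suc m) c = 0"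
    show "W * proj m c = 0"
    proof (rule zero_if_mult_proj_zero[where m="Suc m"])
      fix g assume g: "g < d"
      show "W * proj m c * proj (Suc m) g = 0"
      proof (cases "g = c")
        case True
        then show ?thesis using zero by (simp add: mult.assoc swap[symmetric]) (simp add: mult.assoc[symmetric])
      next
        case False
        then have "c \<noteq> g" by simp
        have "W * (proj (Suc m) c * proj m g) = 0"
          using zero by (simp add: mult.assoc[symmetric])
        with annihilate_proj_swap[OF m c g \<open>c \<noteq> g\<close> comm] show ?thesis
          by (simp add: mult.assoc)
      qed
    qed
  qed
qed

lemma proj_annihilator_transport:
  assumes "1 \<le> l" "l \<le> m" "m \<le> n" "c < d"
    and G_comm: "\<And>k. l \<le> k \<Longrightarrow> k < m \<Longrightarrow> W * G k = G k * W"
    and T_comm: "\<And>k. l \<le> k \<Longrightarrow> k \<le> m \<Longrightarrow> W * T k = T k * W"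
  shows "W * proj l c = 0 \<longleftrightarrow> W * proj m c = 0"
  using \<open>l \<le> m\<close>
proof (induction m rule: dec_induct)
  case (step k)
  have "W * proj k c = 0 \<longleftrightarrow> W * proj (Suc k) c = 0"
    using step.hyps assms by (intro proj_annihilator_shift) auto
  with step.IH show ?case by simp
qed simp

definition tmonomial :: "(nat \<Rightarrow> nat) \<Rightarrow> 'a" where
  "tmonomial r = prod_list (map (\<lambda>m. T m ^ r m) [1..<n+1])"

inductive_set tspan :: "'a set" where
  tspan_basis: "r \<in> exps d n \<Longrightarrow> tmonomial r \<in> tspan"
| tspan_zero: "0 \<in> tspan"
| tspan_add: "x \<in> tspan \<Longrightarrow> y \<in> tspan \<Longrightarrow> x + y \<in> tspan"
| tspan_scale: "x \<in> tspan \<Longrightarrow> C c * x \<in> tspan"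

inductive_set tg_span :: "'a set" where
  tg_span_basis: "r \<in> exps d n \<Longrightarrow> 1 \<le> k \<Longrightarrow> k \<le> n - 1 \<Longrightarrow> tmonomial r * G k \<in> tg_span"
| tg_span_zero: "0 \<in> tg_span"
| tg_span_add: "x \<in> tg_span \<Longrightarrow> y \<in> tg_span \<Longrightarrow> x + y \<in> tg_span"
| tg_span_scale: "x \<in> tg_span \<Longrightarrow> C c * x \<in> tg_span"

lemma tmonomial_mult_T:
  assumes r: "r \<in> exps d n" and m: "1 \<le> m" "m \<le> n"
  shows "tmonomial r * T m = tmonomial (r(m := (r m + 1) mod d))"
proof -
  let ?r' = "r(m := (r m + 1) mod d)"
  have ups: "[1..<n+1] = [1..<m] @ m # [Suc m..<n+1]"
    using m upt_add_eq_append[of 1 m "n + 1 - m"] upt_conv_Cons[of m "n+1"] by simp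
  let ?P1 = "prod_list (map (\<lambda>j. T j ^ r j) [1..<m])"
  let ?P2 = "prod_list (map (\<lambda>j. T j ^ r j) [Suc m..<n+1])"
  have P1: "prod_list (map (\<lambda>j. T j ^ ?r' j) [1..<m]) = ?P1"
    by (intro arg_cong[where f=prod_list] map_cong) auto
  have P2: "prod_list (map (\<lambda>j. T j ^ ?r' j) [Suc m..<n+1]) = ?P2"
    by (intro arg_cong[where f=prod_list] map_cong) auto
  have "T m * T j ^ k = T j ^ k * T m" if "1 \<le> j" "j \<le> n" for j k
    by (metis power_commuting_commutes T_commute that m)
  then have P2_T: "T m * ?P2 = ?P2 * T m"
    using m by (intro commute_prod_list) auto
  have power: "T m ^ r m * T m = T m ^ ((r m + 1) mod d)"
    using r m T_power_d[OF m] by (cases "r m + 1 = d") (auto simp: exps_def simp flip: power_Suc2)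
  have "tmonomial r * T m = ?P1 * (T m ^ r m * (?P2 * T m))"
    unfolding tmonomial_def ups by (simp only: map_append list.map prod_list.append prod_list.Cons mult.assoc)
  also have "\<dots> = ?P1 * (T m ^ ((r m + 1) mod d) * ?P2)"
    by (simp only: P2_T[symmetric] mult.assoc[symmetric] power)
  also have "\<dots> = tmonomial ?r'"
    unfolding tmonomial_def ups
    by (simp only: map_append list.map prod_list.append prod_list.Cons P1 P2 fun_upd_same)
  finally show ?thesis .
qed

lemma tspan_mult_T: "x \<in> tspan \<Longrightarrow> 1 \<le> m \<Longrightarrow> m \<le> n \<Longrightarrow> x * T m \<in> tspan"
proof (induction x rule: tspan.induct)
  case (tspan_basis r)
  moreover have "r(m := (r m + 1) mod d) \<in> exps d n"
    using tspan_basis d_pos by (auto simp: exps_def)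
  ultimately show ?case by (simp add: tmonomial_mult_T tspan.tspan_basis)
qed (simp_all add: distrib_right mult.assoc tspan.intros)

lemma tspan_mult_T_power: "x \<in> tspan \<Longrightarrow> 1 \<le> m \<Longrightarrow> m \<le> n \<Longrightarrow> x * T m ^ s \<in> tspan"
proof (induction s)
  case (Suc s)
  then have "x * T m ^ s * T m \<in> tspan" by (simp add: tspan_mult_T)
  then show ?case by (simp only: power_Suc2 mult.assoc)
qed simp

lemma tspan_sum: "finite A \<Longrightarrow> (\<And>i. i \<in> A \<Longrightarrow> f i \<in> tspan) \<Longrightarrow> sum f A \<in> tspan"
  by (induction A rule: finite_induct) (auto intro: tspan.intros)

lemma tg_span_sum: "finite A \<Longrightarrow> (\<And>i. i \<in> A \<Longrightarrow> f i \<in> tg_span) \<Longrightarrow> sum f A \<in> tg_span"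
  by (induction A rule: finite_induct) (auto intro: tg_span.intros)

lemma tspan_mult_proj: "x \<in> tspan \<Longrightarrow> 1 \<le> m \<Longrightarrow> m \<le> n \<Longrightarrow> x * proj m a \<in> tspan"
proof -
  assume x: "x \<in> tspan" and m: "1 \<le> m" "m \<le> n"
  have "x * proj m a = C (1 / of_nat d) * (\<Sum>s<d. C (inverse (zeta d ^ a) ^ s) * (x * T m ^ s))"
    unfolding proj_def by (simp add: sum_distrib_left C_left_commute[where a=x])
  also have "\<dots> \<in> tspan" using x m by (intro tspan.tspan_scale tspan_sum tspan_mult_T_power) auto
  finally show ?thesis .
qed

lemma one_in_tspan: "1 \<in> tspan"
proof -
  have "(\<lambda>_. 0) \<in> exps d n" using d_pos by (simp add: exps_def)
  moreover have "tmonomial (\<lambda>_. 0) = 1"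
    unfolding tmonomial_def by (induction n) auto
  ultimately show ?thesis by (metis tspan.tspan_basis)
qed

lemma tspan_mult_G: "x \<in> tspan \<Longrightarrow> 1 \<le> k \<Longrightarrow> k \<le> n - 1 \<Longrightarrow> x * G k \<in> tg_span"
  by (induction x rule: tspan.induct) (simp_all add: distrib_right mult.assoc tg_span.intros)

lemma T_proj_commute_mult:
  "1 \<le> m \<Longrightarrow> m \<le> n \<Longrightarrow> 1 \<le> m' \<Longrightarrow> m' \<le> n \<Longrightarrow> T m' * (proj m a * r) = proj m a * (T m' * r)"
  by (simp add: mult.assoc[symmetric] T_proj_commute)

lemma proj_commute_mult:
  "1 \<le> m \<Longrightarrow> m \<le> n \<Longrightarrow> 1 \<le> m' \<Longrightarrow> m' \<le> n \<Longrightarrow> proj m' b * (proj m a * r) = proj m a * (proj m' b * r)"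
  by (simp add: mult.assoc[symmetric] proj_commute)

lemma G_T_commute_far:
  "1 \<le> k \<Longrightarrow> k \<le> n - 1 \<Longrightarrow> 1 \<le> m \<Longrightarrow> m \<le> n \<Longrightarrow> m \<noteq> k \<Longrightarrow> m \<noteq> k + 1 \<Longrightarrow> G k * T m = T m * G k"
  using T_mult_G[of k m] by (simp add: transp_def)

lemma proj_G_commute_far:
  "1 \<le> k \<Longrightarrow> k \<le> n - 1 \<Longrightarrow> 1 \<le> m \<Longrightarrow> m \<le> n \<Longrightarrow> m \<noteq> k \<Longrightarrow> m \<noteq> k + 1 \<Longrightarrow>
    proj m a * G k = G k * proj m a"
  using proj_mult_G[of k m a] by (simp add: transp_def)

lemma absorbing_mult_G_G:
  assumes "x \<in> tspan" "(G k + 1) * x = 0" "x * G k = G k * x" "1 \<le> l" "l \<le> n - 1"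
  shows "x * G k * G l \<in> tg_span"
proof -
  have "G k * x = - x" using assms(2) by (simp add: distrib_right eq_neg_iff_add_eq_0)
  then have "x * G k * G l = C (- 1) * (x * G l)"
    using assms(3) by (simp add: C_minus C_one)
  then show ?thesis using assms by (simp add: tg_span.tg_span_scale tspan_mult_G)
qed

context
  fixes i j :: nat
  assumes ij: "1 \<le> i" "i + 1 < j" "j + 1 \<le> n"
begin

abbreviation P :: "nat \<Rightarrow> nat \<Rightarrow> nat \<Rightarrow> nat \<Rightarrow> 'a" where
  "P a b c e \<equiv> proj i a * (proj (Suc i) b * (proj j c * proj (Suc j) e))"

lemma index_bounds: "1 \<le> i" "i \<le> n" "1 \<le> Suc i" "Suc i \<le> n" "1 \<le> j" "j \<le> n" "1 \<le> Suc j"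
  "Suc j \<le> n" "i \<le> n - 1" "j \<le> n - 1" "Suc i \<le> n - 1"
  using ij by auto

lemma P_in_tspan: "P a b c e \<in> tspan"
proof -
  have "1 * proj i a * proj (Suc i) b * proj j c * proj (Suc j) e \<in> tspan"
    using index_bounds by (intro tspan_mult_proj one_in_tspan) auto
  then show ?thesis by (simp add: mult.assoc)
qed

lemma X_mult_P:
  "(T i + T (Suc i) - T j - T (Suc j)) * P a b c e
     = C (zeta d ^ a + zeta d ^ b - zeta d ^ c - zeta d ^ e) * P a b c e"
proof -
  note r = index_bounds
  have e1: "T i * P a b c e = C (zeta d ^ a) * P a b c e"
    by (simp add: mult.assoc[symmetric] T_mult_proj[OF r(1,2)])
  have "T (Suc i) * P a b c e = proj i a * (T (Suc i) * (proj (Suc i) b * (proj j c * proj (Suc j) e)))"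
    by (simp only: mult.assoc[symmetric] T_proj_commute[OF r(1,2) r(3,4)])
  also have "\<dots> = C (zeta d ^ b) * P a b c e"
    by (simp add: mult.assoc[symmetric] T_mult_proj[OF r(3,4)]) (simp add: mult.assoc C_left_commute[where a="proj i a"])
  finally have e2: "T (Suc i) * P a b c e = C (zeta d ^ b) * P a b c e" .
  have "T j * P a b c e = proj i a * (proj (Suc i) b * (T j * (proj j c * proj (Suc j) e)))"
    by (simp only: T_proj_commute_mult[OF r(1,2) r(5,6)] T_proj_commute_mult[OF r(3,4) r(5,6)])
  also have "\<dots> = C (zeta d ^ c) * P a b c e"
    by (simp add: mult.assoc[symmetric] T_mult_proj[OF r(5,6)])
       (simp add: mult.assoc C_left_commute[where a="proj i a"] C_left_commute[where a="proj (Suc i) b"])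
  finally have e3: "T j * P a b c e = C (zeta d ^ c) * P a b c e" .
  have "T (Suc j) * P a b c e = proj i a * (proj (Suc i) b * (proj j c * (T (Suc j) * proj (Suc j) e)))"
    by (simp only: T_proj_commute_mult[OF r(1,2) r(7,8)] T_proj_commute_mult[OF r(3,4) r(7,8)]
        T_proj_commute_mult[OF r(5,6) r(7,8)])
  also have "\<dots> = C (zeta d ^ e) * P a b c e"
    by (simp add: T_mult_proj[OF r(7,8)] C_left_commute[where a="proj i a"]
        C_left_commute[where a="proj (Suc i) b"] C_left_commute[where a="proj j c"])
  finally have e4: "T (Suc j) * P a b c e = C (zeta d ^ e) * P a b c e" .
  show ?thesis
    by (simp only: distrib_right left_diff_distrib e1 e2 e3 e4 C_add C_diff)
qed

lemma P_split:
  "P a b c e = proj i a * proj (Suc i) b * proj (Suc j) e * proj j c"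
  "P a b c e = proj j c * proj (Suc j) e * proj i a * proj (Suc i) b"
  "P a b c e = proj j c * proj (Suc j) e * proj (Suc i) b * proj i a"
proof -
  note r = index_bounds
  have "proj j c * proj (Suc j) e = proj (Suc j) e * proj j c"
    using r by (simp add: proj_commute)
  then show "P a b c e = proj i a * proj (Suc i) b * proj (Suc j) e * proj j c"
    by (simp add: mult.assoc)
  have "proj m x * (proj j c * proj (Suc j) e) = proj j c * proj (Suc j) e * proj m x"
    if "1 \<le> m" "m \<le> n" for m x
    using r that by (intro commute_mult[symmetric]) (simp_all add: proj_commute)
  then have "(proj i a * proj (Suc i) b) * (proj j c * proj (Suc j) e)
      = (proj j c * proj (Suc j) e) * (proj i a * proj (Suc i) b)"
    using r by (intro commute_mult) auto
  then have "P a b c e = (proj j c * proj (Suc j) e) * (proj i a * proj (Suc i) b)"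
    by (simp add: mult.assoc)
  moreover have "proj i a * proj (Suc i) b = proj (Suc i) b * proj i a"
    using r by (simp add: proj_commute)
  ultimately show "P a b c e = proj j c * proj (Suc j) e * proj i a * proj (Suc i) b"
    and "P a b c e = proj j c * proj (Suc j) e * proj (Suc i) b * proj i a"
    by (simp_all only: mult.assoc)
qed

lemma P_zero_if_right_factor_zero:
  assumes "Y * (proj i a * proj (Suc i) b) * proj m w = 0" "m = j \<and> w = c \<or> m = Suc j \<and> w = e"
  shows "Y * P a b c e = 0"
  using assms(2)
proof (elim disjE conjE)
  assume "m = j" "w = c"
  then have "Y * P a b c e = Y * (proj i a * proj (Suc i) b) * proj m w * proj (Suc j) e"
    by (simp add: mult.assoc)
  then show ?thesis using assms(1) by simp
next
  assume "m = Suc j" "w = e"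
  then have "Y * P a b c e = Y * (proj i a * proj (Suc i) b) * proj m w * proj j c"
    by (subst P_split(1)) (simp add: mult.assoc)
  then show ?thesis using assms(1) by simp
qed

lemma P_zero_if_left_factor_zero:
  assumes "Y * (proj j c * proj (Suc j) e) * proj m w = 0" "m = i \<and> w = a \<or> m = Suc i \<and> w = b"
  shows "Y * P a b c e = 0"
  using assms(2)
proof (elim disjE conjE)
  assume "m = i" "w = a"
  then have "Y * P a b c e = Y * (proj j c * proj (Suc j) e) * proj m w * proj (Suc i) b"
    by (subst P_split(2)) (simp add: mult.assoc)
  then show ?thesis using assms(1) by simp
next
  assume "m = Suc i" "w = b"
  then have "Y * P a b c e = Y * (proj j c * proj (Suc j) e) * proj m w * proj i a"
    by (subst P_split(3)) (simp add: mult.assoc)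
  then show ?thesis using assms(1) by simp
qed

lemma G_add_one_mult_P_left:
  assumes abc: "a < d" "c < d" "e < d" and "c \<noteq> a \<or> e \<noteq> a"
  shows "(G i + 1) * P a a c e = 0"
proof -
  note r = index_bounds
  let ?W = "(G i + 1) * (proj i a * proj (Suc i) a)"
  obtain m w where mw: "m = j \<and> w = c \<or> m = Suc j \<and> w = e" and w: "w \<noteq> a" "w < d"
    using assms by blast
  have "?W * proj (i+2) w = 0"
    using G_add_one_mult_proj3[of i a w] ij abc w by (simp add: proj3_def mult.assoc)
  moreover have "?W * proj (i+2) w = 0 \<longleftrightarrow> ?W * proj m w = 0"
  proof (rule proj_annihilator_transport)
    show "1 \<le> i + 2" "i + 2 \<le> m" "m \<le> n" "w < d" using mw ij w by auto
    fix k assume k: "i + 2 \<le> k"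
    show "?W * G k = G k * ?W" if "k < m"
      using k that mw r by (intro commute_mult commute_add_one G_commute_far proj_G_commute_far) auto
    show "?W * T k = T k * ?W" if "k \<le> m"
      using k that mw r
      by (intro commute_mult commute_add_one G_T_commute_far T_proj_commute[symmetric]) auto
  qed
  ultimately have "?W * proj m w = 0" by simp
  then show ?thesis using mw by (rule P_zero_if_right_factor_zero)
qed

lemma G_add_one_mult_P_right:
  assumes abc: "a < d" "b < d" "c < d" and "a \<noteq> c \<or> b \<noteq> c"
  shows "(G j + 1) * P a b c c = 0"
proof -
  note r = index_bounds
  let ?W = "(G j + 1) * (proj j c * proj (Suc j) c)"
  obtain m w where mw: "m = i \<and> w = a \<or> m = Suc i \<and> w = b" and w: "w \<noteq> c" "w < d"
    using assms by blast
  have "(G (Suc (j - 1)) + 1) * proj3 (j - 1) w c c = 0"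
    using G_Suc_add_one_mult_proj3[of "j - 1" w c] ij abc w by auto
  moreover have "proj3 (j - 1) w c c = proj j c * proj (Suc j) c * proj (j - 1) w"
    using r ij by (simp add: proj3_def numeral_2_eq_2 mult.assoc proj_commute)
  ultimately have "?W * proj (j - 1) w = 0"
    using ij by (simp add: mult.assoc)
  moreover have "?W * proj m w = 0 \<longleftrightarrow> ?W * proj (j - 1) w = 0"
  proof (rule proj_annihilator_transport)
    show "1 \<le> m" "m \<le> j - 1" "j - 1 \<le> n" "w < d" using mw ij w by auto
    fix k assume k: "m \<le> k"
    show "?W * G k = G k * ?W" if "k < j - 1"
      using k that mw r by (intro commute_mult commute_add_one G_commute_far proj_G_commute_far) auto
    show "?W * T k = T k * ?W" if "k \<le> j - 1"
      using k that mw r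
      by (intro commute_mult commute_add_one G_T_commute_far T_proj_commute[symmetric]) auto
  qed
  ultimately have "?W * proj m w = 0" by simp
  then show ?thesis using mw by (rule P_zero_if_left_factor_zero)
qed

lemma P_vanishes:
  assumes abc: "a < d" "b < d" "c < d" "e < d" "a \<noteq> b" and "c \<notin> {a, b} \<or> e \<notin> {a, b}"
  shows "P a b c e = 0"
proof -
  note r = index_bounds
  let ?W = "proj i a * proj (Suc i) b"
  obtain m w where mw: "m = j \<and> w = c \<or> m = Suc j \<and> w = e" and w: "w \<notin> {a, b}" "w < d"
    using assms by blast
  have "?W * proj (i+2) w = 0"
    using proj3_distinct[of i a b w] ij abc w by (simp add: proj3_def)
  moreover have "?W * proj (i+2) w = 0 \<longleftrightarrow> ?W * proj m w = 0"
  proof (rule proj_annihilator_transport)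
    show "1 \<le> i + 2" "i + 2 \<le> m" "m \<le> n" "w < d" using mw ij w by auto
    fix k assume k: "i + 2 \<le> k"
    show "?W * G k = G k * ?W" if "k < m"
      using k that mw r by (intro commute_mult proj_G_commute_far) auto
    show "?W * T k = T k * ?W" if "k \<le> m"
      using k that mw r by (intro commute_mult T_proj_commute[symmetric]) auto
  qed
  ultimately have "1 * ?W * proj m w = 0" by simp
  then have "1 * P a b c e = 0" using mw by (rule P_zero_if_right_factor_zero)
  then show ?thesis by simp
qed

lemma C_mult_P_G_G_in_tg_span:
  assumes abc: "a < d" "b < d" "c < d" "e < d"
  shows "C (zeta d ^ a + zeta d ^ b - zeta d ^ c - zeta d ^ e) * (P a b c e * (G i * G j)) \<in> tg_span"
    (is "C ?coeff * _ \<in> _")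
proof -
  note r = index_bounds
  have GiP: "P a a c e * G i = G i * P a a c e" for c e
    using r ij by (simp add: mult.assoc proj_mult_G proj_mult_G_mult transp_def proj_commute_mult proj_commute)
  have GjP: "P a b c c * G j = G j * P a b c c" for a b
    using r ij by (simp add: mult.assoc proj_mult_G proj_mult_G_mult transp_def proj_commute_mult proj_commute)
  have GG: "G i * G j = G j * G i" using r ij by (intro G_commute_far) auto
  consider "?coeff = 0" | "a = b" "c \<noteq> a \<or> e \<noteq> a" | "a \<noteq> b" "c = e"
    | "a \<noteq> b" "c \<notin> {a, b} \<or> e \<notin> {a, b}"
    by fastforce
  then have "P a b c e * (G i * G j) \<in> tg_span \<or> ?coeff = 0"
  proof cases
    case 2
    then show ?thesis
      using absorbing_mult_G_G[OF P_in_tspan G_add_one_mult_P_left GiP] abc r by (simp add: mult.assoc)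
  next
    case 3
    then show ?thesis
      using absorbing_mult_G_G[OF P_in_tspan G_add_one_mult_P_right GjP] abc r by (simp add: mult.assoc GG)
  next
    case 4
    then show ?thesis using P_vanishes abc by (simp add: tg_span.tg_span_zero)
  qed simp
  then show ?thesis by (auto simp: C_zero tg_span.tg_span_scale tg_span.tg_span_zero)
qed

lemma X_mult_G_G_in_tg_span: "(T i + T (Suc i) - T j - T (Suc j)) * (G i * G j) \<in> tg_span"
proof -
  let ?X = "T i + T (Suc i) - T j - T (Suc j)"
  have "?X * (G i * G j)
      = ?X * ((\<Sum>a<d. proj i a) * ((\<Sum>b<d. proj (Suc i) b) * ((\<Sum>c<d. proj j c) * (\<Sum>e<d. proj (Suc j) e))))
        * (G i * G j)"
    by (simp add: sum_proj)
  also have "\<dots> = (\<Sum>e<d. \<Sum>c<d. \<Sum>b<d. \<Sum>a<d. (?X * P a b c e) * (G i * G j))"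
    by (simp add: sum_distrib_left sum_distrib_right mult.assoc)
  also have "\<dots> = (\<Sum>e<d. \<Sum>c<d. \<Sum>b<d. \<Sum>a<d.
      C (zeta d ^ a + zeta d ^ b - zeta d ^ c - zeta d ^ e) * (P a b c e * (G i * G j)))"
    by (simp only: X_mult_P mult.assoc)
  also have "\<dots> \<in> tg_span"
    by (intro tg_span_sum C_mult_P_G_G_in_tg_span) auto
  finally show ?thesis .
qed

end

lemma X_mult_G_G_in_tg_span_sym:
  assumes "1 \<le> i" "i + 1 \<le> n" "1 \<le> j" "j + 1 \<le> n" "i + 1 < j \<or> j + 1 < i"
  shows "(T i + T (Suc i) - T j - T (Suc j)) * (G i * G j) \<in> tg_span"
proof (cases "i + 1 < j")
  case False
  then have "C (- 1) * ((T j + T (Suc j) - T i - T (Suc i)) * (G j * G i)) \<in> tg_span"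
    using assms X_mult_G_G_in_tg_span[of j i] by (intro tg_span.tg_span_scale) auto
  moreover have "G j * G i = G i * G j" using assms False by (intro G_commute_far) auto
  ultimately show ?thesis by (simp add: C_minus C_one algebra_simps)
qed (use assms X_mult_G_G_in_tg_span in auto)

end

section \<open>The generators in the product algebra\<close>

lemma fpoly_fgen [simp]: "fpoly (fgen x)"
  by (rule fpoly.intros)

definition scalar :: "complex \<Rightarrow> palg" where
  "scalar c = Abs_palg (fscale c fone)"

lemma Rep_palg_scalar: "Rep_palg (scalar c) = fscale c fone"
  unfolding scalar_def by (rule Rep_palg_Abs_palg) (auto intro: fpoly.intros)

lemma Rep_palg_scalar_mult: "Rep_palg (scalar c * x) = fscale c (Rep_palg x)"
  unfolding Rep_palg_mult Rep_palg_scalar by (simp add: fmul_scale_left fmul_one_left)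

lemma scalar_add: "scalar (x + y) = scalar x + scalar y"
  by (simp add: Rep_palg_inject[symmetric] Rep_palg_add Rep_palg_scalar fadd_def fscale_def algebra_simps)

lemma scalar_mult: "scalar (x * y) = scalar x * scalar y"
  by (simp add: Rep_palg_inject[symmetric] Rep_palg_scalar_mult Rep_palg_scalar fscale_def mult.assoc)

lemma scalar_one: "scalar 1 = 1"
  by (simp add: Rep_palg_inject[symmetric] Rep_palg_scalar Rep_palg_one fscale_def)

lemma scalar_commute: "scalar c * x = x * scalar c"
  by (simp add: Rep_palg_inject[symmetric] Rep_palg_mult Rep_palg_scalar
      fmul_scale_left fmul_one_left fmul_scale_right fmul_one_right)

text \<open>In the coordinate (d, n) the generators are the images of the free generators; in all
  other coordinates T = 1, G = -1, U = 1 is a trivial solution of the relations.\<close>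

definition at_param :: "nat \<Rightarrow> nat \<Rightarrow> fa \<Rightarrow> palg \<Rightarrow> nat \<times> nat \<Rightarrow> palg" where
  "at_param d n f x = (\<lambda>p. if p = (d, n) then Abs_palg f else x)"

definition ytl_T :: "nat \<Rightarrow> nat \<Rightarrow> nat \<Rightarrow> ytl_prod" where
  "ytl_T d n m = abs_ytl_prod (at_param d n (tt m) 1)"

definition ytl_G :: "nat \<Rightarrow> nat \<Rightarrow> nat \<Rightarrow> ytl_prod" where
  "ytl_G d n m = abs_ytl_prod (at_param d n (gg m) (- 1))"

definition ytl_U :: "nat \<Rightarrow> nat \<Rightarrow> ytl_prod" where
  "ytl_U d n = abs_ytl_prod (at_param d n uu 1)"

definition ytl_C :: "complex \<Rightarrow> ytl_prod" where
  "ytl_C c = abs_ytl_prod (\<lambda>_. scalar c)"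

lemma at_param_same [simp]: "fpoly f \<Longrightarrow> Rep_palg (at_param d n f x (d, n)) = f"
  by (simp add: at_param_def Rep_palg_Abs_palg)

lemma at_param_other [simp]: "p \<noteq> (d, n) \<Longrightarrow> at_param d n f x p = x"
  by (simp add: at_param_def)

lemma fun_power_apply: "(f ^ k) x = (f x) ^ k"
  for f :: "'b \<Rightarrow> 'c::monoid_mult"
  by (induction k) simp_all

lemma fun_sum_apply: "(sum F S) x = sum (\<lambda>s. F s x) S"
  for F :: "'d \<Rightarrow> 'b \<Rightarrow> 'c::comm_monoid_add"
  by (induction S rule: infinite_finite_induct) simp_all

lemma abs_ytl_prod_power: "abs_ytl_prod F ^ k = abs_ytl_prod (F ^ k)"
  by (induction k) (simp_all only: power_0 power_Suc one_ytl_prod.abs_eq times_ytl_prod.abs_eq)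

lemma abs_ytl_prod_sum: "sum (\<lambda>x. abs_ytl_prod (f x)) S = abs_ytl_prod (sum f S)"
proof (induction S rule: infinite_finite_induct)
  case (infinite A) then show ?case by (simp only: sum.infinite[OF infinite] zero_ytl_prod.abs_eq)
next
  case empty then show ?case by (simp only: sum.empty zero_ytl_prod.abs_eq)
next
  case (insert x F)
  then show ?case by (simp only: sum.insert[OF insert(1,2)] insert(3) plus_ytl_prod.abs_eq)
qed

lemma abs_ytl_prod_prod_list:
  "prod_list (map (\<lambda>x. abs_ytl_prod (f x)) xs) = abs_ytl_prod (prod_list (map f xs))"
  by (induction xs) (simp_all only: list.map prod_list.Nil prod_list.Cons one_ytl_prod.abs_eq times_ytl_prod.abs_eq)

lemma abs_ytl_prod_eqI:
  assumes "fsub (Rep_palg (A (d, n))) (Rep_palg (B (d, n))) \<in> fideal (ytl_rels d n)"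
    and "\<And>p. p \<noteq> (d, n) \<Longrightarrow> A p = B p"
  shows "abs_ytl_prod A = abs_ytl_prod B"
  unfolding ytl_prod.abs_eq_iff ytl_equiv_def
proof (intro allI)
  fix d' n'
  show "Rep_palg (A (d', n') - B (d', n')) \<in> fideal (ytl_rels d' n')"
    using assms by (cases "(d', n') = (d, n)") (auto simp: Rep_palg_diff Rep_palg_zero fideal.zero)
qed

lemma ytl_relations_ytl_prod:
  assumes "0 < d"
  shows "ytl_relations (ytl_T d n) (ytl_G d n) (ytl_U d n) ytl_C d n"
proof
  show "0 < d" by (rule assms)
  fix x y :: complex and a :: ytl_prod
  show "ytl_C (x + y) = ytl_C x + ytl_C y" "ytl_C (x * y) = ytl_C x * ytl_C y"
    by (simp_all add: ytl_C_def scalar_add scalar_mult plus_ytl_prod.abs_eq times_ytl_prod.abs_eq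
        plus_fun_def times_fun_def)
  show "ytl_C 1 = 1"
    by (simp add: ytl_C_def scalar_one one_ytl_prod.abs_eq one_fun_def)
  obtain A where "a = abs_ytl_prod A"
    using Quotient3_abs_rep[OF Quotient3_ytl_prod] by metis
  then show "ytl_C x * a = a * ytl_C x"
    by (simp add: ytl_C_def times_ytl_prod.abs_eq times_fun_def scalar_commute)
next
  fix m m' assume "1 \<le> m" "m \<le> n" "1 \<le> m'" "m' \<le> n"
  then have "fsub (fmul (tt m) (tt m')) (fmul (tt m') (tt m)) \<in> ytl_rels d n"
    unfolding ytl_rels_def by blast
  then show "ytl_T d n m * ytl_T d n m' = ytl_T d n m' * ytl_T d n m"
    unfolding ytl_T_def times_ytl_prod.abs_eq
    by (intro abs_ytl_prod_eqI[where d=d and n=n]) (simp_all add: Rep_palg_mult fideal.gen)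
next
  fix m assume "1 \<le> m" "m \<le> n"
  then have "fsub (fpow (tt m) d) fone \<in> ytl_rels d n"
    unfolding ytl_rels_def by blast
  then show "ytl_T d n m ^ d = 1"
    unfolding ytl_T_def abs_ytl_prod_power one_ytl_prod.abs_eq
    by (intro abs_ytl_prod_eqI[where d=d and n=n])
       (simp_all add: Rep_palg_power Rep_palg_one fun_power_apply fideal.gen)
next
  fix k m assume "1 \<le> k" "k \<le> n - 1" "1 \<le> m" "m \<le> n"
  then have "fsub (fmul (tt m) (gg k)) (fmul (gg k) (tt (transp k m))) \<in> ytl_rels d n"
    unfolding ytl_rels_def by blast
  then show "ytl_T d n m * ytl_G d n k = ytl_G d n k * ytl_T d n (transp k m)"
    unfolding ytl_T_def ytl_G_def times_ytl_prod.abs_eq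
    by (intro abs_ytl_prod_eqI[where d=d and n=n]) (simp_all add: Rep_palg_mult fideal.gen)
next
  fix k k' assume "1 \<le> k" "k \<le> n - 1" "1 \<le> k'" "k' \<le> n - 1" "k + 1 < k' \<or> k' + 1 < k"
  then have "fsub (fmul (gg k) (gg k')) (fmul (gg k') (gg k)) \<in> ytl_rels d n"
    unfolding ytl_rels_def by blast
  then show "ytl_G d n k * ytl_G d n k' = ytl_G d n k' * ytl_G d n k"
    unfolding ytl_G_def times_ytl_prod.abs_eq
    by (intro abs_ytl_prod_eqI[where d=d and n=n]) (simp_all add: Rep_palg_mult fideal.gen)
next
  fix k assume "1 \<le> k" "k \<le> n - 1"
  then have "fsub (fmul (gg k) (gg k))
      (fadd fone (fadd (fmul (fsub uu fone) (ee d k)) (fmul (fmul (fsub uu fone) (ee d k)) (gg k))))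
      \<in> ytl_rels d n"
    unfolding ytl_rels_def by blast
  then show "ytl_G d n k * ytl_G d n k = 1 + (ytl_U d n - 1) * (ytl_C (1 / of_nat d) *
      (\<Sum>s = 0..<d. ytl_T d n k ^ s * ytl_T d n (k + 1) ^ ((d - s) mod d))) +
      (ytl_U d n - 1) * (ytl_C (1 / of_nat d) *
      (\<Sum>s = 0..<d. ytl_T d n k ^ s * ytl_T d n (k + 1) ^ ((d - s) mod d))) * ytl_G d n k"
    unfolding ytl_T_def ytl_G_def ytl_U_def ytl_C_def abs_ytl_prod_power times_ytl_prod.abs_eq
      abs_ytl_prod_sum one_ytl_prod.abs_eq minus_ytl_prod.abs_eq plus_ytl_prod.abs_eq
    by (intro abs_ytl_prod_eqI[where d=d and n=n])
       (simp_all add: fun_power_apply fun_sum_apply Rep_palg_diff Rep_palg_add Rep_palg_mult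
         Rep_palg_power Rep_palg_sum Rep_palg_one Rep_palg_scalar fpoly_fpow ee_def
         fmul_scale_left fmul_one_left fadd_assoc fideal.gen)
next
  fix k assume "1 \<le> k" "k + 2 \<le> n"
  then have "fsumset {0..<6::nat} (\<lambda>q. [fprod [gg k, gg (k+1), gg k], fmul (gg k) (gg (k+1)),
      fmul (gg (k+1)) (gg k), gg k, gg (k+1), fone] ! q) \<in> ytl_rels d n"
    unfolding ytl_rels_def by blast
  moreover have "fsumset {0..<6::nat} (\<lambda>q. [fprod [gg k, gg (k+1), gg k], fmul (gg k) (gg (k+1)),
      fmul (gg (k+1)) (gg k), gg k, gg (k+1), fone] ! q)
    = fadd (fadd (fadd (fadd (fadd (fmul (fmul (gg k) (gg (k+1))) (gg k)) (fmul (gg k) (gg (k+1))))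
        (fmul (gg (k+1)) (gg k))) (gg k)) (gg (k+1))) fone"
    by (rule ext) (simp add: fsumset_def fadd_def fprod_def fmul_assoc fmul_one_right numeral_eq_Suc)
  ultimately show "ytl_G d n k * ytl_G d n (k + 1) * ytl_G d n k + ytl_G d n k * ytl_G d n (k + 1)
      + ytl_G d n (k + 1) * ytl_G d n k + ytl_G d n k + ytl_G d n (k + 1) + 1 = 0"
    unfolding ytl_G_def times_ytl_prod.abs_eq one_ytl_prod.abs_eq plus_ytl_prod.abs_eq
      zero_ytl_prod.abs_eq
    by (intro abs_ytl_prod_eqI[where d=d and n=n])
       (simp_all add: Rep_palg_add Rep_palg_mult Rep_palg_one Rep_palg_zero fsub_fzero fideal.gen)
qed

lemma Lspan_alt:
  "Lspan X = {(\<lambda>w. \<Sum>x\<in>F. c x * fmul (upow (snd x)) (fst x) w) | F c. finite F \<and> fst ` F \<subseteq> X}"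
  unfolding Lspan_def fsumset_def fscale_def by (simp add: case_prod_unfold)

lemma Lspan_zero: "fzero \<in> Lspan X"
  unfolding Lspan_alt by (rule CollectI, rule exI[of _ "{}"]) (auto simp: fzero_def)

lemma Lspan_base: "s \<in> X \<Longrightarrow> s \<in> Lspan X"
  unfolding Lspan_alt
  by (intro CollectI exI[of _ "{(s, 0)}"] exI[of _ "\<lambda>_. 1"])
     (simp add: upow_def fpow_def fprod_def fmul_one_left)

lemma Lspan_elim:
  assumes "a \<in> Lspan X"
  obtains F c where "a = (\<lambda>w. \<Sum>x\<in>F. c x * fmul (upow (snd x)) (fst x) w)" "finite F" "fst ` F \<subseteq> X"
proof -
  have "\<exists>F c. a = (\<lambda>w. \<Sum>x\<in>F. c x * fmul (upow (snd x)) (fst x) w) \<and> finite F \<and> fst ` F \<subseteq> X"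
    using assms unfolding Lspan_alt by simp
  then show ?thesis using that by blast
qed

lemma Lspan_intro:
  "finite F \<Longrightarrow> fst ` F \<subseteq> X \<Longrightarrow> (\<lambda>w. \<Sum>x\<in>F. c x * fmul (upow (snd x)) (fst x) w) \<in> Lspan X"
  unfolding Lspan_alt by blast

lemma Lspan_add:
  assumes "a \<in> Lspan X" "b \<in> Lspan X"
  shows "fadd a b \<in> Lspan X"
proof -
  let ?h = "\<lambda>x. fmul (upow (snd x)) (fst x)"
  obtain F1 c1 where F1: "a = (\<lambda>w. \<Sum>x\<in>F1. c1 x * ?h x w)" "finite F1" "fst ` F1 \<subseteq> X"
    using assms(1) by (rule Lspan_elim)
  obtain F2 c2 where F2: "b = (\<lambda>w. \<Sum>x\<in>F2. c2 x * ?h x w)" "finite F2" "fst ` F2 \<subseteq> X"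
    using assms(2) by (rule Lspan_elim)
  define c where "c x = (if x \<in> F1 then c1 x else 0) + (if x \<in> F2 then c2 x else 0)" for x
  have "(\<Sum>x\<in>F1. c1 x * ?h x w) = (\<Sum>x\<in>F1 \<union> F2. (if x \<in> F1 then c1 x else 0) * ?h x w)"
    and "(\<Sum>x\<in>F2. c2 x * ?h x w) = (\<Sum>x\<in>F1 \<union> F2. (if x \<in> F2 then c2 x else 0) * ?h x w)" for w
    using F1(2) F2(2) by (auto intro: sum.mono_neutral_cong_left)
  then have "fadd a b = (\<lambda>w. \<Sum>x\<in>F1 \<union> F2. c x * ?h x w)"
    by (simp add: F1(1) F2(1) fadd_def c_def distrib_right sum.distrib)
  then show ?thesis
    using Lspan_intro[of "F1 \<union> F2" X c] F1(2,3) F2(2,3) by (simp add: image_Un)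
qed

lemma Lspan_scale:
  assumes "a \<in> Lspan X"
  shows "fscale c a \<in> Lspan X"
proof -
  obtain F c1 where F: "a = (\<lambda>w. \<Sum>x\<in>F. c1 x * fmul (upow (snd x)) (fst x) w)" "finite F" "fst ` F \<subseteq> X"
    using assms by (rule Lspan_elim)
  then have "fscale c a = (\<lambda>w. \<Sum>x\<in>F. (c * c1 x) * fmul (upow (snd x)) (fst x) w)"
    by (simp add: fscale_def sum_distrib_left mult.assoc)
  then show ?thesis
    using F(2,3) by (simp add: Lspan_intro)
qed

lemma Rep_palg_at_param_tmonomial:
  "Rep_palg (prod_list (map (\<lambda>m. at_param d n (tt m) 1 ^ r m) xs) (d, n))
    = fprod (map (\<lambda>m. fpow (tt m) (r m)) xs)"
  by (induction xs) (simp_all add: Rep_palg_one fprod_def Rep_palg_mult fun_power_apply Rep_palg_power)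

lemma tmono_zero: "tmono n (\<lambda>_. 0) = fone"
proof -
  have "fprod (map (\<lambda>j. fpow (tt j) 0) xs) = fone" for xs
    by (induction xs) (simp_all add: fprod_def fpow_def fmul_one_left)
  then show ?thesis by (simp add: tmono_def)
qed

lemma gik_single: "gik [(k, 0)] = gg k"
  by (simp add: gik_def fprod_def fmul_one_right)

lemma exps_finite: "finite (exps d n)"
proof -
  have "exps d n = {r. \<forall>j. (j \<in> {1..n} \<longrightarrow> r j \<in> {..<d}) \<and> (j \<notin> {1..n} \<longrightarrow> r j = 0)}"
    by (auto simp: exps_def)
  then show ?thesis by (simp only:) (rule finite_set_of_finite_funs; simp)
qed

definition unit_exp :: "nat \<Rightarrow> nat \<Rightarrow> nat" where
  "unit_exp m = (\<lambda>k. if k = m then 1 else 0)"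

lemma xvar_eq_indicator:
  assumes "2 \<le> d"
  shows "xvar d m = (\<lambda>r. if r = unit_exp m then 1 else 0)"
proof -
  have "1 mod d = (1::nat)" using assms by simp
  then show ?thesis unfolding xvar_def unit_exp_def by (simp only:)
qed

lemma unit_exp_in_exps: "2 \<le> d \<Longrightarrow> 1 \<le> m \<Longrightarrow> m \<le> n \<Longrightarrow> unit_exp m \<in> exps d n"
  by (auto simp: exps_def unit_exp_def)

lemma tmono_unit_exp:
  assumes "1 \<le> m" "m \<le> n"
  shows "tmono n (unit_exp m) = tt m"
proof -
  have "fprod (map (\<lambda>j. fpow (tt j) (unit_exp m j)) xs) = (if m \<in> set xs then tt m else fone)"
    if "distinct xs" for xs
    using that by (induction xs) (auto simp: fprod_def unit_exp_def fpow_def fmul_one_left fmul_one_right)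
  then show ?thesis
    using assms by (simp add: tmono_def del: upt_Suc)
qed

lemma evalA_xvar:
  assumes "2 \<le> d" "1 \<le> m" "m \<le> n"
  shows "evalA d n (xvar d m) = tt m"
proof
  fix w
  have "evalA d n (xvar d m) w = (\<Sum>r\<in>exps d n. if r = unit_exp m then tmono n r w else 0)"
    unfolding evalA_def fsumset_def fscale_def xvar_eq_indicator[OF assms(1)] by (intro sum.cong) auto
  also have "\<dots> = tt m w"
    using assms by (simp add: exps_finite unit_exp_in_exps tmono_unit_exp)
  finally show "evalA d n (xvar d m) w = tt m w" .
qed

lemma evalA_diff:
  "evalA d n (\<lambda>r. P r + Q r - R r - S r)
    = fsub (fsub (fadd (evalA d n P) (evalA d n Q)) (evalA d n R)) (evalA d n S)"
  by (simp add: evalA_def fsumset_def fscale_def fadd_def fsub_def algebra_simps sum.distrib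
      sum_subtractf)

lemma xvar_diff_in_Adn:
  assumes "2 \<le> d" "1 \<le> i" "i + 1 \<le> n" "1 \<le> j" "j + 1 \<le> n"
  shows "(\<lambda>r. xvar d i r + xvar d (i+1) r - xvar d j r - xvar d (j+1) r) \<in> Adn d n"
  using assms unit_exp_in_exps[OF assms(1)]
  by (auto simp: Adn_def xvar_eq_indicator split: if_splits)

lemma zero_in_Rset: "(\<lambda>_. 0) \<in> Rset d n r js"
proof -
  have "evalA d n (\<lambda>_. 0) = fzero"
    by (simp add: evalA_def fsumset_def fscale_def fzero_def)
  then have "fsub (fmul (evalA d n (\<lambda>_. 0)) (tword n r js)) fzero = fzero"
    by (simp add: fmul_zero_left fsub_fzero)
  then show ?thesis
    by (auto simp: Rset_def Adn_def intro!: bexI[of _ fzero] Lspan_zero fideal.zero)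
qed

context
  fixes d n :: nat
  assumes d: "0 < d"
begin

interpretation Y: ytl_relations "ytl_T d n" "ytl_G d n" "ytl_U d n" ytl_C d n
  "\<lambda>k. ytl_C (1 / of_nat d) * (\<Sum>s\<in>{0..<d}. ytl_T d n k ^ s * ytl_T d n (k+1) ^ ((d - s) mod d))"
  by (rule ytl_relations_ytl_prod[OF d]) (rule reflexive)

lemma tg_span_in_Lspan:
  "x \<in> Y.tg_span \<Longrightarrow> \<exists>F. x = abs_ytl_prod F \<and> Rep_palg (F (d, n)) \<in> Lspan (Slt d n 2)"
proof (induction x rule: Y.tg_span.induct)
  case (tg_span_basis r k)
  let ?F = "prod_list (map (\<lambda>m. at_param d n (tt m) 1 ^ r m) [1..<n+1]) * at_param d n (gg k) (- 1)"
  have abs: "Y.tmonomial r * ytl_G d n k = abs_ytl_prod ?F"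
    unfolding Y.tmonomial_def ytl_T_def ytl_G_def abs_ytl_prod_power abs_ytl_prod_prod_list
    by (simp only: times_ytl_prod.abs_eq)
  have rep: "Rep_palg (?F (d, n)) = fmul (tmono n r) (gik [(k, 0)])"
    by (simp add: Rep_palg_mult Rep_palg_at_param_tmonomial tmono_def gik_single)
  have "fmul (tmono n r) (gik [(k, 0)]) \<in> Slt d n 2"
    unfolding Slt_def using tg_span_basis
    by (intro CollectI exI[of _ r] exI[of _ "[(k, 0)]"]) (auto simp: Tn_def gdeg_def)
  then have "Rep_palg (?F (d, n)) \<in> Lspan (Slt d n 2)"
    unfolding rep by (rule Lspan_base)
  with abs show ?case by blast
next
  case tg_span_zero
  show ?case
    by (rule exI[of _ 0]) (simp add: zero_ytl_prod.abs_eq Rep_palg_zero Lspan_zero zero_fun_def)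
next
  case (tg_span_add x y)
  then obtain Fx Fy where "x = abs_ytl_prod Fx" "Rep_palg (Fx (d, n)) \<in> Lspan (Slt d n 2)"
    "y = abs_ytl_prod Fy" "Rep_palg (Fy (d, n)) \<in> Lspan (Slt d n 2)" by blast
  then show ?case
    by (intro exI[of _ "Fx + Fy"]) (simp add: plus_ytl_prod.abs_eq Rep_palg_add Lspan_add plus_fun_def)
next
  case (tg_span_scale x c)
  then obtain F where "x = abs_ytl_prod F" "Rep_palg (F (d, n)) \<in> Lspan (Slt d n 2)" by blast
  then show ?case
    by (intro exI[of _ "(\<lambda>_. scalar c) * F"])
       (simp add: ytl_C_def times_ytl_prod.abs_eq Rep_palg_scalar_mult Lspan_scale times_fun_def)
qed

lemma Rset_if_tg_span:
  assumes P: "P \<in> Adn d n" and X: "Rep_palg (X (d, n)) = evalA d n P"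
    and span: "abs_ytl_prod X * (ytl_G d n i * ytl_G d n j) \<in> Y.tg_span"
  shows "P \<in> Rset d n (\<lambda>_. 0) [i, j]"
proof -
  let ?XGG = "X * (at_param d n (gg i) (- 1) * at_param d n (gg j) (- 1))"
  obtain F where F: "abs_ytl_prod ?XGG = abs_ytl_prod F" "Rep_palg (F (d, n)) \<in> Lspan (Slt d n 2)"
    using tg_span_in_Lspan[OF span] by (auto simp: ytl_G_def times_ytl_prod.abs_eq)
  then have "Rep_palg (?XGG (d, n) - F (d, n)) \<in> fideal (ytl_rels d n)"
    by (simp add: ytl_prod.abs_eq_iff ytl_equiv_def)
  moreover have "Rep_palg (?XGG (d, n)) = fmul (evalA d n P) (tword n (\<lambda>_. 0) [i, j])"
    by (simp add: Rep_palg_mult X tword_def tmono_zero fprod_def fmul_one_left fmul_one_right)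
  ultimately show ?thesis
    using P F(2) by (auto simp: Rset_def Rep_palg_diff numeral_2_eq_2)
qed

lemma xvar_diff_in_Rset:
  assumes "2 \<le> d" "1 \<le> i" "i + 1 \<le> n" "1 \<le> j" "j + 1 \<le> n" "i + 1 < j \<or> j + 1 < i"
  shows "(\<lambda>r. xvar d i r + xvar d (i+1) r - xvar d j r - xvar d (j+1) r) \<in> Rset d n (\<lambda>_. 0) [i, j]"
proof -
  let ?X = "at_param d n (tt i) 1 + at_param d n (tt (i+1)) 1 - at_param d n (tt j) 1
    - at_param d n (tt (j+1)) 1"
  have "abs_ytl_prod ?X = ytl_T d n i + ytl_T d n (Suc i) - ytl_T d n j - ytl_T d n (Suc j)"
    by (simp add: ytl_T_def plus_ytl_prod.abs_eq minus_ytl_prod.abs_eq)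
  then have "abs_ytl_prod ?X * (ytl_G d n i * ytl_G d n j) \<in> Y.tg_span"
    using Y.X_mult_G_G_in_tg_span_sym assms(2-6) by simp
  moreover have "Rep_palg (?X (d, n)) = evalA d n (\<lambda>r. xvar d i r + xvar d (i+1) r - xvar d j r - xvar d (j+1) r)"
    using assms by (simp add: Rep_palg_add Rep_palg_diff evalA_diff evalA_xvar)
  ultimately show ?thesis
    using xvar_diff_in_Adn[OF assms(1-5)] by (intro Rset_if_tg_span)
qed

end

theorem mainTheorem15:
  fixes d n i j :: nat
  assumes "1 \<le> d" and "3 \<le> n"
    and "1 \<le> i" and "i \<le> n - 1" and "1 \<le> j" and "j \<le> n - 1"
    and "i + 1 < j \<or> j + 1 < i"
  shows "(\<lambda>r. xvar d i r + xvar d (i+1) r - xvar d j r - xvar d (j+1) r)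
           \<in> Rset d n (\<lambda>_. 0) [i, j]"
proof (cases "d = 1")
  case True
  then have "1 mod d = (0::nat)" by simp
  then have "(\<lambda>r. xvar d i r + xvar d (i+1) r - xvar d j r - xvar d (j+1) r) = (\<lambda>_. 0)"
    unfolding xvar_def by (simp only:) simp
  then show ?thesis by (simp add: zero_in_Rset)
next
  case False
  with assms show ?thesis by (intro xvar_diff_in_Rset) auto
qed

end
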